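(* Let $K$ be a perfect field, $k\subset K$ a subfield, and $\lambda\in\operatorname{Emb}(K)$ with $|\lambda^G|=n<\infty$. Then the two-sided vector space $V(\lambda)$ is simple and is isomorphic to the simple two-sided vector space $K^n_\phi$ corresponding to $\lambda$. Consequently, the left dimension of $V(\lambda)$ over $K$ is $[K(\lambda):K]$ and the right dimension of $V(\lambda)$ over $K$ is $[K(\lambda):\lambda(K)]$.
   Context: Let $\overline{K}$ be a fixed algebraic closure of $K$. A two-sided vector space is a $K\otimes_k K$-module; left (resp. right) multiplication by $K$ means the action of $K\otimes 1$ (resp. $1\otimes K$). $\operatorname{Emb}(K)$ is the set of $k$-linear field embeddings $K\to\overline{K}$; $G=\operatorname{Aut}(\overline{K}/K)$ acts on it by left composition, with orbits $\lambda^G$. $K(\lambda)\subset\overline{K}$ denotes the composite of $K$ and $\lambda(K)$, and $V(\lambda)$ is the two-sided vector space with underlying set $K(\lambda)$ and action $a\cdot v\cdot b=av\lambda(b)$. For a homomorphism $\phi:K\to M_n(K)$, $K^n_\phi$ denotes the row vectors $K^n$ with left action by scalar multiplication and right action $v\cdot x=v\phi(x)$. The simple two-sided vector space corresponding to $\lambda$ is $K^n_\phi$ where: $\alpha_1,\dots,\alpha_n$ is a basis of $K(\lambda)$ over $K$, $\lambda_i:K\to K$ are defined by $\lambda(x)=\sum_i\lambda_i(x)\alpha_i$, $\beta_{ijk}\in K$ are defined by $\alpha_i\alpha_j=\sum_k\beta_{ijk}\alpha_k$, and $\phi_{ij}(x)=\sum_k\beta_{jki}\lambda_k(x)$. (By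 a known classification, $\lambda^G\mapsto K^n_\phi$ is a bijection between finite $G$-orbits and isomorphism classes of simple two-sided vector spaces of finite left dimension.) *)

theory Defs
  imports "HOL-Computational_Algebra.Polynomial" "HOL-Library.Function_Algebras"
begin

text \<open>Ambient setting: the type 'a (a field) plays the role of the fixed algebraic
closure of K; K and k are subfields given as subsets of 'a.\<close>

definition is_subfield :: "'a::field set \<Rightarrow> bool" where
  "is_subfield F \<longleftrightarrow> 0 \<in> F \<and> 1 \<in> F \<and>
     (\<forall>x\<in>F. \<forall>y\<in>F. x + y \<in> F \<and> x * y \<in> F) \<and>
     (\<forall>x\<in>F. - x \<in> F \<and> inverse x \<in> F)"

definition is_alg_closure_of :: "'a::field set \<Rightarrow> bool" where
  "is_alg_closure_of K \<longleftrightarrow>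
     (\<forall>p::'a poly. degree p > 0 \<longrightarrow> (\<exists>x. poly p x = 0)) \<and>
     (\<forall>x::'a. \<exists>p. p \<noteq> 0 \<and> (\<forall>i. coeff p i \<in> K) \<and> poly p x = 0)"

definition perfect_subfield :: "'a::field set \<Rightarrow> bool" where
  "perfect_subfield K \<longleftrightarrow> is_subfield K \<and>
     (CHAR('a) = 0 \<or> (\<forall>x\<in>K. \<exists>y\<in>K. y ^ CHAR('a) = x))"

text \<open>k-linear field embeddings K \<rightarrow> closure (values outside K irrelevant).\<close>
definition is_emb :: "'a::field set \<Rightarrow> 'a set \<Rightarrow> ('a \<Rightarrow> 'a) \<Rightarrow> bool" where
  "is_emb k K lam \<longleftrightarrow>
     (\<forall>x\<in>K. \<forall>y\<in>K. lam (x + y) = lam x + lam y \<and> lam (x * y) = lam x * lam y) \<and>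
     lam 1 = 1 \<and> (\<forall>c\<in>k. \<forall>x\<in>K. lam (c * x) = c * lam x)"

definition Gal_cl :: "'a::field set \<Rightarrow> ('a \<Rightarrow> 'a) set" where
  "Gal_cl K = {\<sigma>. bij \<sigma> \<and> (\<forall>x y. \<sigma> (x + y) = \<sigma> x + \<sigma> y \<and> \<sigma> (x * y) = \<sigma> x * \<sigma> y)
                  \<and> (\<forall>x\<in>K. \<sigma> x = x)}"

text \<open>The orbit of lam under G (embeddings identified by their restriction to K).\<close>
definition emb_orbit :: "'a::field set \<Rightarrow> ('a \<Rightarrow> 'a) \<Rightarrow> ('a \<Rightarrow> 'a) set" where
  "emb_orbit K lam = {(\<lambda>x. if x \<in> K then \<sigma> (lam x) else undefined) | \<sigma>. \<sigma> \<in> Gal_cl K}"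

definition composite :: "'a::field set \<Rightarrow> ('a \<Rightarrow> 'a) \<Rightarrow> 'a set" where
  "composite K lam = \<Inter>{F. is_subfield F \<and> K \<subseteq> F \<and> lam ` K \<subseteq> F}"

record ('s, 'v) tsvs =
  vcarrier :: "'v set"
  lsmul :: "'s \<Rightarrow> 'v \<Rightarrow> 'v"
  rsmul :: "'v \<Rightarrow> 's \<Rightarrow> 'v"

definition is_tsvs :: "'a::field set \<Rightarrow> 'a set \<Rightarrow> ('a, 'v::ab_group_add) tsvs \<Rightarrow> bool" where
  "is_tsvs k K V \<longleftrightarrow> (let C = vcarrier V in
     0 \<in> C \<and> (\<forall>v\<in>C. \<forall>w\<in>C. v + w \<in> C) \<and> (\<forall>v\<in>C. - v \<in> C) \<and>
     (\<forall>a\<in>K. \<forall>v\<in>C. lsmul V a v \<in> C \<and> rsmul V v a \<in> C) \<and>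
     (\<forall>a\<in>K. \<forall>v\<in>C. \<forall>w\<in>C. lsmul V a (v + w) = lsmul V a v + lsmul V a w \<and>
                          rsmul V (v + w) a = rsmul V v a + rsmul V w a) \<and>
     (\<forall>a\<in>K. \<forall>b\<in>K. \<forall>v\<in>C.
        lsmul V (a + b) v = lsmul V a v + lsmul V b v \<and>
        rsmul V v (a + b) = rsmul V v a + rsmul V v b \<and>
        lsmul V (a * b) v = lsmul V a (lsmul V b v) \<and>
        rsmul V v (a * b) = rsmul V (rsmul V v a) b \<and>
        rsmul V (lsmul V a v) b = lsmul V a (rsmul V v b)) \<and>
     (\<forall>v\<in>C. lsmul V 1 v = v \<and> rsmul V v 1 = v) \<and>
     (\<forall>c\<in>k. \<forall>v\<in>C. lsmul V c v = rsmul V v c))"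

definition is_sub_tsvs :: "'a::field set \<Rightarrow> ('a, 'v::ab_group_add) tsvs \<Rightarrow> 'v set \<Rightarrow> bool" where
  "is_sub_tsvs K V W \<longleftrightarrow> W \<subseteq> vcarrier V \<and> 0 \<in> W \<and> (\<forall>v\<in>W. \<forall>w\<in>W. v + w \<in> W) \<and>
     (\<forall>a\<in>K. \<forall>v\<in>W. lsmul V a v \<in> W \<and> rsmul V v a \<in> W)"

definition simple_tsvs :: "'a::field set \<Rightarrow> 'a set \<Rightarrow> ('a, 'v::ab_group_add) tsvs \<Rightarrow> bool" where
  "simple_tsvs k K V \<longleftrightarrow> is_tsvs k K V \<and> vcarrier V \<noteq> {0} \<and>
     (\<forall>W. is_sub_tsvs K V W \<longrightarrow> W = {0} \<or> W = vcarrier V)"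

definition iso_tsvs :: "'a::field set \<Rightarrow> ('a, 'v::ab_group_add) tsvs \<Rightarrow> ('a, 'w::ab_group_add) tsvs \<Rightarrow> bool" where
  "iso_tsvs K V W \<longleftrightarrow> (\<exists>f. bij_betw f (vcarrier V) (vcarrier W) \<and>
     (\<forall>v\<in>vcarrier V. \<forall>w\<in>vcarrier V. f (v + w) = f v + f w) \<and>
     (\<forall>a\<in>K. \<forall>v\<in>vcarrier V. f (lsmul V a v) = lsmul W a (f v) \<and> f (rsmul V v a) = rsmul W (f v) a))"

definition is_basis :: "'a::field set \<Rightarrow> ('a \<Rightarrow> 'v \<Rightarrow> 'v) \<Rightarrow> 'v::ab_group_add set \<Rightarrow> 'v set \<Rightarrow> bool" where
  "is_basis F smul S B \<longleftrightarrow> finite B \<and> B \<subseteq> S \<and>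
     (\<forall>c. (\<forall>b\<in>B. c b \<in> F) \<longrightarrow> (\<Sum>b\<in>B. smul (c b) b) = 0 \<longrightarrow> (\<forall>b\<in>B. c b = 0)) \<and>
     (\<forall>v\<in>S. \<exists>c. (\<forall>b\<in>B. c b \<in> F) \<and> v = (\<Sum>b\<in>B. smul (c b) b))"

text \<open>Dimension (0 if there is no finite basis; not relevant below).\<close>
definition vs_dim :: "'a::field set \<Rightarrow> ('a \<Rightarrow> 'v \<Rightarrow> 'v) \<Rightarrow> 'v::ab_group_add set \<Rightarrow> nat" where
  "vs_dim F smul S = (if \<exists>B. is_basis F smul S B then card (SOME B. is_basis F smul S B) else 0)"

definition left_dim :: "'a::field set \<Rightarrow> ('a, 'v::ab_group_add) tsvs \<Rightarrow> nat" where
  "left_dim K V = vs_dim K (lsmul V) (vcarrier V)"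

definition right_dim :: "'a::field set \<Rightarrow> ('a, 'v::ab_group_add) tsvs \<Rightarrow> nat" where
  "right_dim K V = vs_dim K (\<lambda>a v. rsmul V v a) (vcarrier V)"

definition field_degree :: "'a::field set \<Rightarrow> 'a set \<Rightarrow> nat" where
  "field_degree E F = vs_dim F (*) E"

definition V_lam :: "'a::field set \<Rightarrow> ('a \<Rightarrow> 'a) \<Rightarrow> ('a, 'a) tsvs" where
  "V_lam K lam = \<lparr>vcarrier = composite K lam, lsmul = (\<lambda>a v. a * v), rsmul = (\<lambda>v b. v * lam b)\<rparr>"

text \<open>K^n_phi: row vectors of length n (indices 0..n-1, zero beyond), left action by scalar
multiplication, right action v.x = v phi(x), where phi i j x is the (i,j) entry of phi(x).\<close>
definition Kn_phi :: "'a::field set \<Rightarrow> nat \<Rightarrow> (nat \<Rightarrow> nat \<Rightarrow> 'a \<Rightarrow> 'a) \<Rightarrow> ('a, nat \<Rightarrow> 'a) tsvs" where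
  "Kn_phi K n phi = \<lparr>vcarrier = {v. (\<forall>i. v i \<in> K) \<and> (\<forall>i\<ge>n. v i = 0)},
     lsmul = (\<lambda>a v i. a * v i),
     rsmul = (\<lambda>v x j. if j < n then (\<Sum>i<n. v i * phi i j x) else 0)\<rparr>"

text \<open>The matrix phi from the data alpha (basis), lam_i (coordinates of lam), beta (structure
constants): phi_ij(x) = sum_k beta_jki lam_k(x).\<close>
definition phi_of :: "nat \<Rightarrow> (nat \<Rightarrow> nat \<Rightarrow> nat \<Rightarrow> 'a::field) \<Rightarrow> (nat \<Rightarrow> 'a \<Rightarrow> 'a) \<Rightarrow> nat \<Rightarrow> nat \<Rightarrow> 'a \<Rightarrow> 'a" where
  "phi_of n beta lc i j x = (\<Sum>k<n. beta j k i * lc k x)"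

end

theory Submission
  imports Defs
begin

text \<open>
  Write \<open>L = K(\<lambda>)\<close> and let \<open>\<alpha>\<^sub>1, \<dots>, \<alpha>\<^sub>m\<close> be a \<open>K\<close>-basis of \<open>L\<close>.
  An automorphism \<open>\<sigma>\<close> of the closure over \<open>K\<close> is determined on \<open>L\<close> by the vector
  \<open>(\<sigma> \<alpha>\<^sub>j)\<^sub>j\<close>, and \<open>\<sigma> \<circ> \<lambda>\<close> determines \<open>\<sigma>\<close> on \<open>L\<close>; so the orbit \<open>\<lambda>\<^sup>G\<close> is in
  bijection with the set of these vectors. By Dedekind's lemma they are linearly independent,
  so \<open>|\<lambda>\<^sup>G| \<le> m\<close>. Every embedding of an intermediate field extends (Zorn) to an
  automorphism, so, \<open>K\<close> being perfect, \<open>K\<close> is the fixed field of \<open>G\<close>. Galois descent then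
  shows that a vector \<open>c\<close> with \<open>\<Sum>\<^sub>j c\<^sub>j \<sigma>(\<alpha>\<^sub>j) = 0\<close> for all \<open>\<sigma>\<close> vanishes, because the
  \<open>\<alpha>\<^sub>j\<close> are \<open>K\<close>-independent; hence \<open>|\<lambda>\<^sup>G| \<ge> m\<close>.

  A nonzero sub-bimodule of \<open>V(\<lambda>)\<close> is stable under multiplication by the ring generated by
  \<open>K\<close> and \<open>\<lambda>(K)\<close>, which is the field \<open>L\<close> because \<open>L\<close> is algebraic; hence \<open>V(\<lambda>)\<close> is
  simple. The isomorphism with \<open>K\<^sup>m\<^sub>\<phi>\<close> is \<open>u \<mapsto> (l(u \<alpha>\<^sub>j))\<^sub>j\<close>, where \<open>l\<close> is the first
  coordinate: the pairing \<open>l(u v)\<close> on the field \<open>L\<close> is nondegenerate, which makes the map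
  injective and, by descent and counting dimensions, onto; and \<open>\<phi>(x)\<close> is the matrix of
  multiplication by \<open>\<lambda>(x)\<close> in the basis \<open>\<alpha>\<close>.
\<close>

lemma subfield_zero: "is_subfield F \<Longrightarrow> 0 \<in> F"
  by (simp add: is_subfield_def)

lemma subfield_one: "is_subfield F \<Longrightarrow> 1 \<in> F"
  by (simp add: is_subfield_def)

lemma subfield_add: "is_subfield F \<Longrightarrow> x \<in> F \<Longrightarrow> y \<in> F \<Longrightarrow> x + y \<in> F"
  by (simp add: is_subfield_def)

lemma subfield_mult: "is_subfield F \<Longrightarrow> x \<in> F \<Longrightarrow> y \<in> F \<Longrightarrow> x * y \<in> F"
  by (simp add: is_subfield_def)

lemma subfield_uminus: "is_subfield F \<Longrightarrow> x \<in> F \<Longrightarrow> - x \<in> F"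
  by (simp add: is_subfield_def)

lemma subfield_inverse: "is_subfield F \<Longrightarrow> x \<in> F \<Longrightarrow> inverse x \<in> F"
  by (simp add: is_subfield_def)

lemma subfield_diff: "is_subfield F \<Longrightarrow> x \<in> F \<Longrightarrow> y \<in> F \<Longrightarrow> x - y \<in> F"
  using subfield_add[of F x "-y"] subfield_uminus[of F y] by simp

lemma subfield_divide: "is_subfield F \<Longrightarrow> x \<in> F \<Longrightarrow> y \<in> F \<Longrightarrow> x / y \<in> F"
  by (simp add: divide_inverse subfield_mult subfield_inverse)

lemma subfield_sum: "is_subfield F \<Longrightarrow> (\<And>i. i \<in> A \<Longrightarrow> f i \<in> F) \<Longrightarrow> sum f A \<in> F"
  by (induction A rule: infinite_finite_induct) (auto simp: subfield_zero subfield_add)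

lemma subfield_of_nat: "is_subfield F \<Longrightarrow> of_nat n \<in> F"
  by (induction n) (auto simp: subfield_zero subfield_one subfield_add)

lemma subfield_UNIV: "is_subfield (UNIV :: 'a::field set)"
  by (simp add: is_subfield_def)

lemma subfield_Inter: "\<forall>F\<in>\<F>. is_subfield F \<Longrightarrow> is_subfield (\<Inter>\<F>)"
  by (auto simp: is_subfield_def)

lemma subfield_Union_chain:
  assumes "\<F> \<noteq> {}" "\<And>F. F \<in> \<F> \<Longrightarrow> is_subfield F" "chain\<^sub>\<subseteq> \<F>"
  shows "is_subfield (\<Union>\<F>)"
proof -
  have two: "\<exists>F\<in>\<F>. x \<in> F \<and> y \<in> F" if "x \<in> \<Union>\<F>" "y \<in> \<Union>\<F>" for x y
    using that assms(3) unfolding chain_subset_def by blast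
  obtain F0 where "F0 \<in> \<F>" using assms(1) by blast
  then have "0 \<in> \<Union>\<F>" "1 \<in> \<Union>\<F>" using assms(2) subfield_zero subfield_one by blast+
  moreover have "x + y \<in> \<Union>\<F> \<and> x * y \<in> \<Union>\<F>" if "x \<in> \<Union>\<F>" "y \<in> \<Union>\<F>" for x y
    using two[OF that] assms(2) subfield_add subfield_mult by blast
  moreover have "- x \<in> \<Union>\<F> \<and> inverse x \<in> \<Union>\<F>" if "x \<in> \<Union>\<F>" for x
    using that assms(2) subfield_uminus subfield_inverse by blast
  ultimately show ?thesis unfolding is_subfield_def by blast
qed

definition poly_over :: "'a::field set \<Rightarrow> 'a poly \<Rightarrow> bool" where
  "poly_over F p \<longleftrightarrow> (\<forall>i. coeff p i \<in> F)"

lemma poly_over_zero: "is_subfield F \<Longrightarrow> poly_over F 0"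
  by (simp add: poly_over_def subfield_zero)

lemma poly_over_const: "is_subfield F \<Longrightarrow> c \<in> F \<Longrightarrow> poly_over F [:c:]"
  by (simp add: poly_over_def coeff_pCons subfield_zero split: nat.splits)

lemma poly_over_pCons: "is_subfield F \<Longrightarrow> poly_over F (pCons a p) \<longleftrightarrow> a \<in> F \<and> poly_over F p"
  by (auto simp: poly_over_def coeff_pCons split: nat.splits)

lemma poly_over_X: "is_subfield F \<Longrightarrow> poly_over F [:0, 1:]"
  by (simp add: poly_over_pCons poly_over_zero subfield_zero subfield_one)

lemma poly_over_add: "is_subfield F \<Longrightarrow> poly_over F p \<Longrightarrow> poly_over F q \<Longrightarrow> poly_over F (p + q)"
  by (simp add: poly_over_def subfield_add)

lemma poly_over_diff: "is_subfield F \<Longrightarrow> poly_over F p \<Longrightarrow> poly_over F q \<Longrightarrow> poly_over F (p - q)"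
  by (simp add: poly_over_def subfield_diff)

lemma poly_over_mult: "is_subfield F \<Longrightarrow> poly_over F p \<Longrightarrow> poly_over F q \<Longrightarrow> poly_over F (p * q)"
  unfolding poly_over_def
  by (intro allI coeff_mult_semiring_closed[of F]) (auto simp: subfield_zero subfield_add subfield_mult)

lemma poly_over_smult: "is_subfield F \<Longrightarrow> c \<in> F \<Longrightarrow> poly_over F p \<Longrightarrow> poly_over F (smult c p)"
  by (simp add: poly_over_def subfield_mult)

lemma poly_over_monom: "is_subfield F \<Longrightarrow> c \<in> F \<Longrightarrow> poly_over F (monom c n)"
  by (simp add: poly_over_def coeff_monom subfield_zero)

lemma poly_over_mono: "poly_over F p \<Longrightarrow> F \<subseteq> E \<Longrightarrow> poly_over E p"
  by (auto simp: poly_over_def)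

lemma poly_over_eval_in: "is_subfield F \<Longrightarrow> poly_over F p \<Longrightarrow> x \<in> F \<Longrightarrow> poly p x \<in> F"
  by (induction p) (auto simp: poly_over_pCons subfield_add subfield_mult subfield_zero)

lemma degree_cancel_lead_less:
  fixes g mu :: "'a::field poly"
  assumes mu: "mu \<noteq> 0" and le: "degree mu \<le> degree g" and g: "degree g > 0"
  shows "degree (g - monom (lead_coeff g / lead_coeff mu) (degree g - degree mu) * mu) < degree g"
    (is "degree (g - monom ?c ?k * mu) < _")
proof -
  have "degree (monom ?c ?k * mu) \<le> degree g"
    using degree_mult_le[of "monom ?c ?k" mu] degree_monom_le[of ?c ?k] le by linarith
  then have "degree (g - monom ?c ?k * mu) \<le> degree g" using degree_diff_le by blast
  moreover have "coeff (g - monom ?c ?k * mu) (degree g) = 0"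
    using le mu by (simp add: coeff_monom_mult)
  ultimately show ?thesis
    using g by (metis coeff_0_degree_minus_1 degree_0 diff_less less_one nat_less_le order_le_less_trans
        le_degree not_less_eq_eq)
qed

lemma poly_over_division:
  assumes F: "is_subfield F" and mu: "poly_over F mu" "mu \<noteq> 0"
  shows "poly_over F g \<Longrightarrow> \<exists>q r. poly_over F q \<and> poly_over F r \<and> g = mu * q + r \<and> (r = 0 \<or> degree r < degree mu)"
proof (induction "degree g" arbitrary: g rule: less_induct)
  case less
  show ?case
  proof (cases "degree mu = 0")
    case True
    then obtain c where c: "mu = [:c:]" "c \<noteq> 0" using mu(2) by (metis degree_eq_zeroE pCons_0_0)
    have "c \<in> F" using mu(1) c by (metis coeff_pCons_0 poly_over_def)
    then have "poly_over F (smult (inverse c) g)"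
      using less.prems F by (simp add: poly_over_smult subfield_inverse)
    moreover have "g = mu * smult (inverse c) g + 0" using c by simp
    ultimately show ?thesis using F poly_over_zero by blast
  next
    case False
    show ?thesis
    proof (cases "degree g < degree mu")
      case True
      then show ?thesis using less.prems F poly_over_zero by (intro exI[of _ 0] exI[of _ g]) auto
    next
      case False2: False
      define c where "c = lead_coeff g / lead_coeff mu"
      define k where "k = degree g - degree mu"
      have cF: "c \<in> F" unfolding c_def using less.prems mu(1) F by (simp add: poly_over_def subfield_divide)
      have "poly_over F (g - monom c k * mu)"
        using less.prems mu(1) F cF by (simp add: poly_over_diff poly_over_mult poly_over_monom)
      moreover have "degree (g - monom c k * mu) < degree g"
        unfolding c_def k_def using False False2 by (intro degree_cancel_lead_less[OF mu(2)]) simp_all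
      ultimately obtain q r where qr: "poly_over F q" "poly_over F r" "g - monom c k * mu = mu * q + r"
          "r = 0 \<or> degree r < degree mu"
        using less.hyps by blast
      have "g = mu * (q + monom c k) + r" using qr(3) by (simp add: algebra_simps)
      moreover have "poly_over F (q + monom c k)" using qr(1) cF F by (simp add: poly_over_add poly_over_monom)
      ultimately show ?thesis using qr by blast
    qed
  qed
qed

lemma minimal_poly_over_exists:
  assumes F: "is_subfield F" and alg: "\<exists>p. p \<noteq> 0 \<and> poly_over F p \<and> poly p y = 0"
  shows "\<exists>mu. poly_over F mu \<and> poly mu y = 0 \<and> lead_coeff mu = 1 \<and>
           (\<forall>g. poly_over F g \<longrightarrow> poly g y = 0 \<longrightarrow> (\<exists>q. poly_over F q \<and> g = mu * q))"
proof -
  define P where "P d \<longleftrightarrow> (\<exists>p. p \<noteq> 0 \<and> poly_over F p \<and> poly p y = 0 \<and> degree p = d)" for d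
  have "\<exists>d. P d" using alg unfolding P_def by blast
  hence "P (LEAST d. P d)" by (rule LeastI_ex)
  then obtain mu0 where mu0: "mu0 \<noteq> 0" "poly_over F mu0" "poly mu0 y = 0" "degree mu0 = (LEAST d. P d)"
    unfolding P_def by blast
  have div: "\<exists>q. poly_over F q \<and> g = mu0 * q" if g: "poly_over F g" "poly g y = 0" for g
  proof -
    obtain q r where qr: "poly_over F q" "poly_over F r" "g = mu0 * q + r" "r = 0 \<or> degree r < degree mu0"
      using poly_over_division[OF F mu0(2,1) g(1)] by blast
    have "poly r y = 0" using qr(3) g(2) mu0(3) by (simp add: algebra_simps)
    have "r = 0"
    proof (rule ccontr)
      assume "r \<noteq> 0"
      hence "P (degree r)" unfolding P_def using qr(2) \<open>poly r y = 0\<close> by blast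
      hence "(LEAST d. P d) \<le> degree r" by (rule Least_le)
      thus False using qr(4) \<open>r \<noteq> 0\<close> mu0(4) by simp
    qed
    thus ?thesis using qr by auto
  qed
  define c where "c = lead_coeff mu0"
  have c0: "c \<noteq> 0" using mu0(1) c_def by simp
  have cF: "c \<in> F" using mu0(2) c_def by (simp add: poly_over_def)
  define mu where "mu = smult (inverse c) mu0"
  have "poly_over F mu" unfolding mu_def using cF F mu0(2) by (simp add: poly_over_smult subfield_inverse)
  moreover have "poly mu y = 0" unfolding mu_def using mu0(3) by simp
  moreover have "lead_coeff mu = 1" unfolding mu_def c_def using c0 c_def by simp
  moreover have "\<forall>g. poly_over F g \<longrightarrow> poly g y = 0 \<longrightarrow> (\<exists>q. poly_over F q \<and> g = mu * q)"
  proof (intro allI impI)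
    fix g assume g: "poly_over F g" "poly g y = 0"
    obtain q where q: "poly_over F q" "g = mu0 * q" using div[OF g] by blast
    have "g = mu * smult c q" unfolding mu_def using q(2) c0 by (simp add: mult_smult_left mult_smult_right)
    moreover have "poly_over F (smult c q)" using q(1) cF F by (simp add: poly_over_smult)
    ultimately show "\<exists>q. poly_over F q \<and> g = mu * q" by blast
  qed
  ultimately show ?thesis by blast
qed

lemma monic_root_degree_pos:
  fixes p :: "'a::field poly"
  assumes "lead_coeff p = 1" and "poly p x = 0"
  shows "degree p > 0"
proof (rule ccontr)
  assume "\<not> degree p > 0"
  then have "p = 1"
    using assms(1) degree_0_id[of p] by (simp add: one_pCons)
  with assms(2) show False by simp
qed

lemma nonzero_root_inverse_poly:
  assumes F: "is_subfield F" and x: "x \<noteq> 0"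
  shows "p \<noteq> 0 \<Longrightarrow> poly_over F p \<Longrightarrow> poly p x = 0 \<Longrightarrow> \<exists>q. poly_over F q \<and> x * poly q x = 1"
proof (induction p rule: pCons_induct)
  case 0
  then show ?case by simp
next
  case (pCons a p)
  have aF: "a \<in> F" and pF: "poly_over F p" using pCons.prems(2) F by (auto simp: poly_over_pCons)
  show ?case
  proof (cases "a = 0")
    case True
    hence "p \<noteq> 0" using pCons.prems(1) by auto
    moreover have "poly p x = 0" using pCons.prems(3) True x by simp
    ultimately show ?thesis using pCons.IH pF by blast
  next
    case False
    have "a + x * poly p x = 0" using pCons.prems(3) by simp
    hence "x * poly (smult (- inverse a) p) x = 1" using False
      by (simp add: field_simps) (metis add.commute add_eq_0_iff2 mult.commute)
    moreover have "poly_over F (smult (- inverse a) p)" using aF pF F by (simp add: poly_over_smult subfield_inverse subfield_uminus del: smult_minus_left)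
    ultimately show ?thesis by blast
  qed
qed

lemma poly_over_eval_closed:
  assumes F: "is_subfield F" and FS: "F \<subseteq> S"
    and add: "\<And>u v. u \<in> S \<Longrightarrow> v \<in> S \<Longrightarrow> u + v \<in> S"
    and mult: "\<And>u v. u \<in> S \<Longrightarrow> v \<in> S \<Longrightarrow> u * v \<in> S"
    and x: "x \<in> S"
  shows "poly_over F q \<Longrightarrow> poly q x \<in> S"
proof (induction q)
  case 0
  then show ?case using FS subfield_zero[OF F] by auto
next
  case (pCons a q)
  then show ?case using F FS by (auto simp: poly_over_pCons intro!: add mult x)
qed

text \<open>The inverse of a nonzero root of a polynomial over \<open>K\<close> is a polynomial expression in it.\<close>

lemma algebraic_subring_is_subfield:
  assumes K: "is_subfield K" and KS: "K \<subseteq> S"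
    and add: "\<And>u v. u \<in> S \<Longrightarrow> v \<in> S \<Longrightarrow> u + v \<in> S"
    and mult: "\<And>u v. u \<in> S \<Longrightarrow> v \<in> S \<Longrightarrow> u * v \<in> S"
    and alg: "\<And>x. x \<in> S \<Longrightarrow> \<exists>p. p \<noteq> 0 \<and> poly_over K p \<and> poly p x = 0"
  shows "is_subfield S"
proof -
  have inv: "inverse x \<in> S" if x: "x \<in> S" for x
  proof (cases "x = 0")
    case True
    with KS subfield_zero[OF K] show ?thesis by auto
  next
    case False
    obtain p where p: "p \<noteq> 0" "poly_over K p" "poly p x = 0" using alg[OF x] by blast
    obtain q where q: "poly_over K q" "x * poly q x = 1"
      using nonzero_root_inverse_poly[OF K False p] by blast
    have "inverse x = poly q x" using q(2) by (metis inverse_unique)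
    also have "\<dots> \<in> S" by (rule poly_over_eval_closed[OF K KS add mult x q(1)])
    finally show ?thesis .
  qed
  have uminus: "- x \<in> S" if "x \<in> S" for x
    using mult[OF _ that, of "- 1"] KS subfield_uminus[OF K subfield_one[OF K]] by auto
  have "0 \<in> S" "1 \<in> S" using KS subfield_zero[OF K] subfield_one[OF K] by auto
  then show ?thesis unfolding is_subfield_def using add mult uminus inv by simp
qed

lemma subfield_poly_evals:
  assumes D: "is_subfield D" and alg: "\<forall>x. \<exists>p. p \<noteq> 0 \<and> poly_over D p \<and> poly p x = 0"
  shows "is_subfield {poly g y | g. poly_over D g}"
proof (rule algebraic_subring_is_subfield[OF D])
  show "D \<subseteq> {poly g y | g. poly_over D g}"
  proof
    fix a assume "a \<in> D"
    then have "poly_over D [:a:] \<and> a = poly [:a:] y" using D by (simp add: poly_over_const)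
    then show "a \<in> {poly g y | g. poly_over D g}" by blast
  qed
next
  fix u v assume "u \<in> {poly g y | g. poly_over D g}" "v \<in> {poly g y | g. poly_over D g}"
  then obtain g h where gh: "poly_over D g" "poly_over D h" "u = poly g y" "v = poly h y" by blast
  have "poly_over D (g + h)" "poly_over D (g * h)" using gh(1,2) D by (simp_all add: poly_over_add poly_over_mult)
  with gh(3,4) show "u + v \<in> {poly g y | g. poly_over D g}" "u * v \<in> {poly g y | g. poly_over D g}"
    by (metis (mono_tags, lifting) mem_Collect_eq poly_add poly_mult)+
qed (use alg in blast)

definition hom_on :: "'a::field set \<Rightarrow> ('a \<Rightarrow> 'b::field) \<Rightarrow> bool" where
  "hom_on F f \<longleftrightarrow> f 0 = 0 \<and> f 1 = 1 \<and> (\<forall>a\<in>F. \<forall>b\<in>F. f (a + b) = f a + f b \<and> f (a * b) = f a * f b)"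

lemma hom_on_add: "hom_on F f \<Longrightarrow> a \<in> F \<Longrightarrow> b \<in> F \<Longrightarrow> f (a + b) = f a + f b"
  by (simp add: hom_on_def)

lemma hom_on_mult: "hom_on F f \<Longrightarrow> a \<in> F \<Longrightarrow> b \<in> F \<Longrightarrow> f (a * b) = f a * f b"
  by (simp add: hom_on_def)

lemma hom_on_0: "hom_on F f \<Longrightarrow> f 0 = 0" by (simp add: hom_on_def)

lemma hom_on_1: "hom_on F f \<Longrightarrow> f 1 = 1" by (simp add: hom_on_def)

lemma hom_on_uminus: "is_subfield F \<Longrightarrow> hom_on F f \<Longrightarrow> a \<in> F \<Longrightarrow> f (- a) = - f a"
  using hom_on_add[of F f a "-a"] hom_on_0[of F f] subfield_uminus[of F a] by (simp add: eq_neg_iff_add_eq_0 add.commute)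

lemma hom_on_diff: "is_subfield F \<Longrightarrow> hom_on F f \<Longrightarrow> a \<in> F \<Longrightarrow> b \<in> F \<Longrightarrow> f (a - b) = f a - f b"
  using hom_on_add[of F f a "-b"] hom_on_uminus[of F f b] subfield_uminus[of F b] by simp

lemma hom_on_sum: "is_subfield F \<Longrightarrow> hom_on F f \<Longrightarrow> (\<And>i. i \<in> A \<Longrightarrow> g i \<in> F) \<Longrightarrow> f (sum g A) = (\<Sum>i\<in>A. f (g i))"
proof (induction A rule: infinite_finite_induct)
  case (insert x A)
  then show ?case by (simp add: hom_on_add subfield_sum)
qed (auto simp: hom_on_0)

lemma hom_on_nonzero: "is_subfield F \<Longrightarrow> hom_on F f \<Longrightarrow> a \<in> F \<Longrightarrow> a \<noteq> 0 \<Longrightarrow> f a \<noteq> 0"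
  using hom_on_mult[of F f a "inverse a"] hom_on_1[of F f] subfield_inverse[of F a] by auto

lemma hom_on_inj_on:
  assumes F: "is_subfield F" and f: "hom_on F f"
  shows "inj_on f F"
proof (rule inj_onI)
  fix a b assume "a \<in> F" "b \<in> F" "f a = f b"
  then show "a = b"
    using hom_on_diff[OF F f, of a b] hom_on_nonzero[OF F f, of "a - b"] subfield_diff[OF F, of a b] by auto
qed

lemma hom_on_inverse: "is_subfield F \<Longrightarrow> hom_on F f \<Longrightarrow> a \<in> F \<Longrightarrow> f (inverse a) = inverse (f a)"
  using hom_on_mult[of F f a "inverse a"] hom_on_1[of F f] subfield_inverse[of F a] hom_on_0[of F f]
  by (cases "a = 0") (auto intro: inverse_unique[symmetric])

lemma coeff_map_poly_hom_on: "hom_on F f \<Longrightarrow> coeff (map_poly f p) i = f (coeff p i)"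
  by (simp add: coeff_map_poly hom_on_0)

lemma map_poly_hom_on_add: "hom_on F f \<Longrightarrow> poly_over F p \<Longrightarrow> poly_over F q \<Longrightarrow> map_poly f (p + q) = map_poly f p + map_poly f q"
  by (rule poly_eqI) (simp add: coeff_map_poly_hom_on hom_on_add poly_over_def)

lemma map_poly_hom_on_diff: "is_subfield F \<Longrightarrow> hom_on F f \<Longrightarrow> poly_over F p \<Longrightarrow> poly_over F q \<Longrightarrow> map_poly f (p - q) = map_poly f p - map_poly f q"
  by (rule poly_eqI) (simp add: coeff_map_poly_hom_on hom_on_diff poly_over_def)

lemma map_poly_hom_on_mult: "is_subfield F \<Longrightarrow> hom_on F f \<Longrightarrow> poly_over F p \<Longrightarrow> poly_over F q \<Longrightarrow> map_poly f (p * q) = map_poly f p * map_poly f q"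
proof (rule poly_eqI)
  fix n assume F: "is_subfield F" and f: "hom_on F f" and p: "poly_over F p" and q: "poly_over F q"
  have "coeff (map_poly f (p * q)) n = f (\<Sum>i\<le>n. coeff p i * coeff q (n - i))"
    by (simp add: coeff_map_poly_hom_on[OF f] coeff_mult)
  also have "\<dots> = (\<Sum>i\<le>n. f (coeff p i) * f (coeff q (n - i)))"
    using p q F f by (simp add: hom_on_sum hom_on_mult poly_over_def subfield_mult)
  also have "\<dots> = coeff (map_poly f p * map_poly f q) n"
    by (simp add: coeff_mult coeff_map_poly_hom_on[OF f])
  finally show "coeff (map_poly f (p * q)) n = coeff (map_poly f p * map_poly f q) n" .
qed

lemma map_poly_hom_on_const: "hom_on F f \<Longrightarrow> map_poly f [:c:] = [:f c:]"
  by (rule poly_eqI) (simp add: coeff_map_poly_hom_on coeff_pCons hom_on_0 split: nat.splits)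

lemma map_poly_hom_on_fixed: "(\<And>a. a \<in> F \<Longrightarrow> f a = a) \<Longrightarrow> hom_on F f \<Longrightarrow> poly_over F p \<Longrightarrow> map_poly f p = p"
  by (rule poly_eqI) (simp add: coeff_map_poly_hom_on poly_over_def)

lemma poly_map_poly_hom_on: "is_subfield F \<Longrightarrow> hom_on F f \<Longrightarrow> x \<in> F \<Longrightarrow> poly_over F p \<Longrightarrow> f (poly p x) = poly (map_poly f p) (f x)"
proof (induction p)
  case 0
  then show ?case by (simp add: hom_on_0)
next
  case (pCons a p)
  have aF: "a \<in> F" and pF: "poly_over F p" using pCons.prems by (auto simp: poly_over_pCons)
  have "f (poly (pCons a p) x) = f a + f x * f (poly p x)"
    using pCons.prems aF pF by (simp add: hom_on_add hom_on_mult poly_over_eval_in subfield_mult)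
  also have "\<dots> = f a + f x * poly (map_poly f p) (f x)" using pCons.IH pCons.prems pF by simp
  also have "map_poly f (pCons a p) = pCons (f a) (map_poly f p)"
    by (rule poly_eqI) (simp add: coeff_map_poly_hom_on[OF pCons.prems(2)] coeff_pCons split: nat.splits)
  ultimately show ?case by simp
qed

lemma degree_map_poly_hom_on: "is_subfield F \<Longrightarrow> hom_on F f \<Longrightarrow> poly_over F p \<Longrightarrow> degree (map_poly f p) = degree p"
proof (cases "p = 0")
  case False
  assume F: "is_subfield F" and f: "hom_on F f" and p: "poly_over F p"
  have "degree (map_poly f p) \<le> degree p" by (rule map_poly_degree_leq)
  moreover have "coeff (map_poly f p) (degree p) \<noteq> 0"
    using False F f p by (simp add: coeff_map_poly_hom_on hom_on_nonzero poly_over_def)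
  ultimately show ?thesis using le_degree by (metis le_antisym)
qed simp

text \<open>Evaluation at a root \<open>z\<close> of the image of the minimal polynomial of \<open>y\<close> is well defined on
  \<open>D[y]\<close>.\<close>

lemma map_poly_eval_eq_if_eval_eq:
  assumes D: "is_subfield D" and f: "hom_on D f"
    and mu: "poly_over D mu" "\<forall>g. poly_over D g \<longrightarrow> poly g y = 0 \<longrightarrow> (\<exists>q. poly_over D q \<and> g = mu * q)"
    and z: "poly (map_poly f mu) z = 0"
    and g: "poly_over D g" and h: "poly_over D h" and eq: "poly g y = poly h y"
  shows "poly (map_poly f g) z = poly (map_poly f h) z"
proof -
  have "poly_over D (g - h)" "poly (g - h) y = 0" using g h D eq by (simp_all add: poly_over_diff)
  then obtain q where q: "poly_over D q" "g - h = mu * q" using mu(2) by blast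
  have "map_poly f g - map_poly f h = map_poly f (g - h)" using map_poly_hom_on_diff[OF D f g h] by simp
  also have "\<dots> = map_poly f mu * map_poly f q" using q map_poly_hom_on_mult[OF D f mu(1) q(1)] by simp
  finally have "poly (map_poly f g) z - poly (map_poly f h) z = 0"
    using z by (metis mult_zero_left poly_diff poly_mult)
  then show ?thesis by simp
qed

lemma is_alg_closure_ofD:
  assumes "is_alg_closure_of K"
  shows "\<forall>p::'a::field poly. degree p > 0 \<longrightarrow> (\<exists>x. poly p x = 0)"
    and "\<forall>x::'a. \<exists>p. p \<noteq> 0 \<and> poly_over K p \<and> poly p x = 0"
  using assms unfolding is_alg_closure_of_def poly_over_def by auto

lemma Gal_clI:
  assumes "bij s" "\<And>x y. s (x + y) = s x + s y" "\<And>x y. s (x * y) = s x * s y" "\<And>x. x \<in> K \<Longrightarrow> s x = x"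
  shows "s \<in> Gal_cl K"
  using assms unfolding Gal_cl_def by blast

lemma Gal_clD:
  assumes "s \<in> Gal_cl K"
  shows "bij s" "s (x + y) = s x + s y" "s (x * y) = s x * s y" "x \<in> K \<Longrightarrow> s x = x"
proof -
  have A: "bij s \<and> (\<forall>x y. s (x + y) = s x + s y \<and> s (x * y) = s x * s y) \<and> (\<forall>x\<in>K. s x = x)"
    using assms by (simp add: Gal_cl_def)
  show "bij s" using A by (rule conjunct1)
  show "s (x + y) = s x + s y" using A by simp
  show "s (x * y) = s x * s y" using A by simp
  show "x \<in> K \<Longrightarrow> s x = x" using A by simp
qed

lemma Gal_cl_hom_on:
  assumes S: "s \<in> Gal_cl K"
  shows "hom_on UNIV s"
proof -
  note b = Gal_clD(1)[OF S] and a = Gal_clD(2)[OF S] and m = Gal_clD(3)[OF S]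
  have "s 0 + s 0 = s 0 + 0" using a[of 0 0] by simp
  hence s0: "s 0 = 0" by (rule add_left_imp_eq)
  have inj: "inj s" using b by (rule bij_is_inj)
  have "s 1 \<noteq> 0"
  proof
    assume "s 1 = 0"
    hence "s 1 = s 0" using s0 by simp
    hence "(1::'a) = 0" using inj by (simp add: inj_eq)
    thus False by simp
  qed
  moreover have "s 1 * (s 1 - 1) = 0" using m[of 1 1] by (simp add: algebra_simps)
  ultimately have "s 1 = 1" by simp
  thus ?thesis unfolding hom_on_def using s0 a m by simp
qed

lemma Gal_cl_id: "id \<in> Gal_cl K"
  unfolding Gal_cl_def by simp

lemma Gal_cl_inv:
  assumes s: "s \<in> Gal_cl K"
  shows "inv s \<in> Gal_cl K"
proof (rule Gal_clI)
  have b: "bij s" by (rule Gal_clD(1)[OF s])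
  then have s_inv: "s (inv s x) = x" and inv_s: "inv s (s x) = x" for x
    by (simp_all add: bij_def surj_f_inv_f inv_f_f)
  show "bij (inv s)" using b by (rule bij_imp_bij_inv)
  fix x y
  have "x + y = s (inv s x + inv s y)" "x * y = s (inv s x * inv s y)"
    by (simp_all add: Gal_clD(2,3)[OF s] s_inv)
  then show "inv s (x + y) = inv s x + inv s y" "inv s (x * y) = inv s x * inv s y"
    by (simp_all add: inv_s)
next
  fix x assume "x \<in> K"
  then have "s x = x" by (rule Gal_clD(4)[OF s])
  then show "inv s x = x" using inv_f_f[OF bij_is_inj[OF Gal_clD(1)[OF s]]] by metis
qed

lemma Gal_cl_comp:
  assumes s: "s \<in> Gal_cl K" and t: "t \<in> Gal_cl K"
  shows "s \<circ> t \<in> Gal_cl K"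
proof (rule Gal_clI)
  show "bij (s \<circ> t)" using Gal_clD(1)[OF s] Gal_clD(1)[OF t] by (rule bij_comp[OF _ , rotated])
next
  fix x y
  show "(s \<circ> t) (x + y) = (s \<circ> t) x + (s \<circ> t) y" by (simp add: Gal_clD(2)[OF s] Gal_clD(2)[OF t])
  show "(s \<circ> t) (x * y) = (s \<circ> t) x * (s \<circ> t) y" by (simp add: Gal_clD(3)[OF s] Gal_clD(3)[OF t])
next
  fix x assume "x \<in> K" thus "(s \<circ> t) x = x" by (simp add: Gal_clD(4)[OF s] Gal_clD(4)[OF t])
qed

lemma Gal_cl_inv_app: "s \<in> Gal_cl K \<Longrightarrow> s (inv s x) = x"
  using Gal_clD(1)[of s K] by (simp add: bij_def surj_f_inv_f)

lemma Gal_cl_sum: "s \<in> Gal_cl K \<Longrightarrow> s (sum f A) = (\<Sum>i\<in>A. s (f i))"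
  by (rule hom_on_sum[OF subfield_UNIV Gal_cl_hom_on]) auto

lemma Gal_cl_mult: "s \<in> Gal_cl K \<Longrightarrow> s (a * b) = s a * s b"
  by (rule Gal_clD(3))

section \<open>Extending embeddings to automorphisms\<close>

text \<open>Partial embeddings are recorded by their graphs, so that the union of a chain of them is
  again one and Zorn's lemma applies.\<close>

definition partial_emb :: "'a::field set \<Rightarrow> ('a \<times> 'a) set \<Rightarrow> bool" where
  "partial_emb K G \<longleftrightarrow> (\<forall>x a b. (x, a) \<in> G \<longrightarrow> (x, b) \<in> G \<longrightarrow> a = b) \<and> is_subfield (Domain G) \<and>
     (\<forall>x\<in>K. (x, x) \<in> G) \<and> (1, 1) \<in> G \<and>
     (\<forall>x a y b. (x, a) \<in> G \<longrightarrow> (y, b) \<in> G \<longrightarrow> (x + y, a + b) \<in> G \<and> (x * y, a * b) \<in> G)"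

definition graph_fun :: "('a \<times> 'a) set \<Rightarrow> 'a \<Rightarrow> 'a" where
  "graph_fun G x = (THE a. (x, a) \<in> G)"

lemma partial_embI:
  assumes "\<And>x a b. (x, a) \<in> G \<Longrightarrow> (x, b) \<in> G \<Longrightarrow> a = b" "is_subfield (Domain G)"
    "\<And>x. x \<in> K \<Longrightarrow> (x, x) \<in> G" "(1, 1) \<in> G"
    "\<And>x a y b. (x, a) \<in> G \<Longrightarrow> (y, b) \<in> G \<Longrightarrow> (x + y, a + b) \<in> G \<and> (x * y, a * b) \<in> G"
  shows "partial_emb K G"
  using assms unfolding partial_emb_def by blast

lemma partial_emb_single_valued: "partial_emb K G \<Longrightarrow> (x, a) \<in> G \<Longrightarrow> (x, b) \<in> G \<Longrightarrow> a = b"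
  unfolding partial_emb_def by blast

lemma partial_emb_subfield: "partial_emb K G \<Longrightarrow> is_subfield (Domain G)"
  unfolding partial_emb_def by blast

lemma partial_emb_id: "partial_emb K G \<Longrightarrow> x \<in> K \<Longrightarrow> (x, x) \<in> G"
  unfolding partial_emb_def by blast

lemma partial_emb_one: "partial_emb K G \<Longrightarrow> (1, 1) \<in> G"
  unfolding partial_emb_def by blast

lemma partial_emb_add_mult: "partial_emb K G \<Longrightarrow> (x, a) \<in> G \<Longrightarrow> (y, b) \<in> G \<Longrightarrow> (x + y, a + b) \<in> G \<and> (x * y, a * b) \<in> G"
  unfolding partial_emb_def by blast

lemma partial_emb_Domain: "partial_emb K G \<Longrightarrow> K \<subseteq> Domain G"
  unfolding partial_emb_def by blast

lemma partial_emb_graph_fun: "partial_emb K G \<Longrightarrow> (x, a) \<in> G \<Longrightarrow> graph_fun G x = a"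
  unfolding graph_fun_def partial_emb_def by (rule the_equality) auto

lemma partial_emb_graph_fun_mem: "partial_emb K G \<Longrightarrow> x \<in> Domain G \<Longrightarrow> (x, graph_fun G x) \<in> G"
proof -
  assume G: "partial_emb K G" and x: "x \<in> Domain G"
  then obtain a where a: "(x, a) \<in> G" by blast
  thus ?thesis using partial_emb_graph_fun[OF G a] by simp
qed

lemma partial_emb_hom_on:
  assumes K: "is_subfield K" and G: "partial_emb K G"
  shows "hom_on (Domain G) (graph_fun G)"
proof -
  have "(0, 0) \<in> G" using G subfield_zero[OF K] unfolding partial_emb_def by blast
  hence "graph_fun G 0 = 0" using partial_emb_graph_fun[OF G] by blast
  moreover have "graph_fun G 1 = 1" using G partial_emb_graph_fun[OF G] unfolding partial_emb_def by blast
  moreover have "graph_fun G (a + b) = graph_fun G a + graph_fun G b \<and> graph_fun G (a * b) = graph_fun G a * graph_fun G b"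
    if "a \<in> Domain G" "b \<in> Domain G" for a b
  proof -
    have "(a, graph_fun G a) \<in> G" "(b, graph_fun G b) \<in> G" using that partial_emb_graph_fun_mem[OF G] by auto
    hence "(a + b, graph_fun G a + graph_fun G b) \<in> G" "(a * b, graph_fun G a * graph_fun G b) \<in> G" using G unfolding partial_emb_def by blast+
    thus ?thesis using partial_emb_graph_fun[OF G] by blast
  qed
  ultimately show ?thesis unfolding hom_on_def by blast
qed

lemma partial_emb_fixes: "partial_emb K G \<Longrightarrow> x \<in> K \<Longrightarrow> graph_fun G x = x"
  using partial_emb_graph_fun unfolding partial_emb_def by blast

lemma partial_emb_Id_on: "is_subfield K \<Longrightarrow> partial_emb K (Id_on K)"
  by (rule partial_embI) (auto simp: subfield_one subfield_add subfield_mult)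

definition adjoin_graph :: "'a::field set \<Rightarrow> ('a \<Rightarrow> 'a) \<Rightarrow> 'a \<Rightarrow> 'a \<Rightarrow> ('a \<times> 'a) set" where
  "adjoin_graph D f y z = {(poly g y, poly (map_poly f g) z) | g. poly_over D g}"

lemma adjoin_graph_const:
  assumes D: "is_subfield D" and f: "hom_on D f" and x: "x \<in> D"
  shows "(x, f x) \<in> adjoin_graph D f y z"
proof -
  have "poly_over D [:x:]" "map_poly f [:x:] = [:f x:]"
    using x D by (simp_all add: poly_over_const map_poly_hom_on_const[OF f])
  then show ?thesis unfolding adjoin_graph_def by force
qed

lemma adjoin_graph_root:
  assumes D: "is_subfield D" and f: "hom_on D f"
  shows "(y, z) \<in> adjoin_graph D f y z"
proof -
  have "map_poly f [:0, 1:] = [:0, 1:]"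
    by (rule poly_eqI) (simp add: coeff_map_poly_hom_on[OF f] coeff_pCons hom_on_0[OF f] hom_on_1[OF f]
        split: nat.splits)
  then have "(y, z) = (poly [:0, 1:] y, poly (map_poly f [:0, 1:]) z)" by simp
  with poly_over_X[OF D] show ?thesis unfolding adjoin_graph_def by blast
qed

lemma partial_emb_adjoin_graph:
  fixes K :: "'a::field set"
  assumes K: "is_subfield K" and G: "partial_emb K G"
    and alg: "\<forall>x::'a. \<exists>p. p \<noteq> 0 \<and> poly_over K p \<and> poly p x = 0"
    and mu: "poly_over (Domain G) mu"
      "\<forall>g. poly_over (Domain G) g \<longrightarrow> poly g y = 0 \<longrightarrow> (\<exists>q. poly_over (Domain G) q \<and> g = mu * q)"
    and z: "poly (map_poly (graph_fun G) mu) z = 0"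
  shows "partial_emb K (adjoin_graph (Domain G) (graph_fun G) y z)"
    (is "partial_emb K ?G'")
proof -
  define D where "D = Domain G"
  define f where "f = graph_fun G"
  have D: "is_subfield D" using partial_emb_subfield[OF G] D_def by simp
  have f: "hom_on D f" unfolding f_def D_def by (rule partial_emb_hom_on[OF K G])
  have KD: "K \<subseteq> D" using partial_emb_Domain[OF G] D_def by simp
  show ?thesis
    unfolding D_def[symmetric] f_def[symmetric]
  proof (rule partial_embI)
    fix x a b assume "(x, a) \<in> adjoin_graph D f y z" "(x, b) \<in> adjoin_graph D f y z"
    then obtain g h where gh: "poly_over D g" "poly_over D h" "x = poly g y" "a = poly (map_poly f g) z"
      "x = poly h y" "b = poly (map_poly f h) z" unfolding adjoin_graph_def by blast
    have eq: "poly g y = poly h y" using gh(3,5) by simp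
    have "poly (map_poly f g) z = poly (map_poly f h) z"
      by (rule map_poly_eval_eq_if_eval_eq[OF D f _ _ _ gh(1,2) eq]) (use mu z in \<open>simp_all add: D_def f_def\<close>)
    with gh(4,6) show "a = b" by simp
  next
    have "Domain (adjoin_graph D f y z) = {poly g y | g. poly_over D g}"
      unfolding adjoin_graph_def by auto
    moreover have "\<forall>x. \<exists>p. p \<noteq> 0 \<and> poly_over D p \<and> poly p x = 0"
      using alg KD poly_over_mono by blast
    ultimately show "is_subfield (Domain (adjoin_graph D f y z))" using subfield_poly_evals[OF D] by simp
  next
    fix x assume "x \<in> K"
    then show "(x, x) \<in> adjoin_graph D f y z"
      using adjoin_graph_const[OF D f, of x] KD partial_emb_fixes[OF G] unfolding f_def by auto
  next
    show "(1, 1) \<in> adjoin_graph D f y z"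
      using adjoin_graph_const[OF D f subfield_one[OF D]] hom_on_1[OF f] by simp
  next
    fix x a x' b assume "(x, a) \<in> adjoin_graph D f y z" "(x', b) \<in> adjoin_graph D f y z"
    then obtain g h where gh: "poly_over D g" "poly_over D h" "x = poly g y" "a = poly (map_poly f g) z"
      "x' = poly h y" "b = poly (map_poly f h) z" unfolding adjoin_graph_def by blast
    have "poly_over D (g + h)" "poly_over D (g * h)" using gh D by (simp_all add: poly_over_add poly_over_mult)
    moreover have "(x + x', a + b) = (poly (g + h) y, poly (map_poly f (g + h)) z)"
      "(x * x', a * b) = (poly (g * h) y, poly (map_poly f (g * h)) z)"
      using gh map_poly_hom_on_add[OF f gh(1,2)] map_poly_hom_on_mult[OF D f gh(1,2)] by simp_all
    ultimately show "(x + x', a + b) \<in> adjoin_graph D f y z \<and> (x * x', a * b) \<in> adjoin_graph D f y z"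
      unfolding adjoin_graph_def by blast
  qed
qed

lemma partial_emb_extend:
  fixes K :: "'a::field set"
  assumes K: "is_subfield K" and G: "partial_emb K G"
    and alg: "\<forall>x::'a. \<exists>p. p \<noteq> 0 \<and> poly_over K p \<and> poly p x = 0"
    and mu: "poly_over (Domain G) mu" "poly mu y = 0"
      "\<forall>g. poly_over (Domain G) g \<longrightarrow> poly g y = 0 \<longrightarrow> (\<exists>q. poly_over (Domain G) q \<and> g = mu * q)"
    and z: "poly (map_poly (graph_fun G) mu) z = 0"
  shows "\<exists>G'. partial_emb K G' \<and> G \<subseteq> G' \<and> (y, z) \<in> G'"
proof (intro exI conjI)
  have D: "is_subfield (Domain G)" by (rule partial_emb_subfield[OF G])
  have f: "hom_on (Domain G) (graph_fun G)" by (rule partial_emb_hom_on[OF K G])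
  show "partial_emb K (adjoin_graph (Domain G) (graph_fun G) y z)"
    by (rule partial_emb_adjoin_graph[OF K G alg mu(1,3) z])
  show "G \<subseteq> adjoin_graph (Domain G) (graph_fun G) y z"
  proof
    fix p assume "p \<in> G"
    then obtain x b where p: "p = (x, b)" "(x, b) \<in> G" by (cases p) auto
    then have "x \<in> Domain G" "graph_fun G x = b" using partial_emb_graph_fun[OF G] by auto
    with adjoin_graph_const[OF D f] p(1) show "p \<in> adjoin_graph (Domain G) (graph_fun G) y z" by blast
  qed
  show "(y, z) \<in> adjoin_graph (Domain G) (graph_fun G) y z" by (rule adjoin_graph_root[OF D f])
qed

lemma partial_emb_Union_chain:
  assumes C: "C \<noteq> {}" "\<And>G. G \<in> C \<Longrightarrow> partial_emb K G" "chain\<^sub>\<subseteq> C"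
  shows "partial_emb K (\<Union>C)"
proof -
  have two: "\<exists>Z\<in>C. X \<subseteq> Z \<and> Y \<subseteq> Z" if XY: "X \<in> C" "Y \<in> C" for X Y
  proof (cases "X \<subseteq> Y")
    case False
    then have "Y \<subseteq> X" using C(3) XY unfolding chain_subset_def by blast
    with XY show ?thesis by blast
  qed (use XY in blast)
  obtain X0 where X0: "X0 \<in> C" using C(1) by blast
  show ?thesis
  proof (rule partial_embI)
    fix x a b assume "(x, a) \<in> \<Union>C" "(x, b) \<in> \<Union>C"
    then obtain X Y where "X \<in> C" "Y \<in> C" "(x, a) \<in> X" "(x, b) \<in> Y" by blast
    then obtain Z where "Z \<in> C" "(x, a) \<in> Z" "(x, b) \<in> Z" using two by blast
    then show "a = b" using partial_emb_single_valued[OF C(2)] by blast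
  next
    have "chain\<^sub>\<subseteq> (Domain ` C)"
      unfolding chain_subset_def
    proof (intro ballI)
      fix A B assume "A \<in> Domain ` C" "B \<in> Domain ` C"
      then obtain X Y where "X \<in> C" "Y \<in> C" "A = Domain X" "B = Domain Y" by blast
      then show "A \<subseteq> B \<or> B \<subseteq> A" using C(3) Domain_mono unfolding chain_subset_def by metis
    qed
    then show "is_subfield (Domain (\<Union>C))"
      unfolding Domain_Union using C(1) partial_emb_subfield[OF C(2)] by (intro subfield_Union_chain) auto
  next
    fix x assume "x \<in> K"
    then show "(x, x) \<in> \<Union>C" using partial_emb_id[OF C(2)[OF X0]] X0 by blast
  next
    show "(1, 1) \<in> \<Union>C" using partial_emb_one[OF C(2)[OF X0]] X0 by blast
  next
    fix x a y b assume "(x, a) \<in> \<Union>C" "(y, b) \<in> \<Union>C"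
    then obtain X Y where "X \<in> C" "Y \<in> C" "(x, a) \<in> X" "(y, b) \<in> Y" by blast
    then obtain Z where Z: "Z \<in> C" "(x, a) \<in> Z" "(y, b) \<in> Z" using two by blast
    then have "(x + y, a + b) \<in> Z \<and> (x * y, a * b) \<in> Z"
      using partial_emb_add_mult[OF C(2)[OF Z(1)]] by blast
    with Z(1) show "(x + y, a + b) \<in> \<Union>C \<and> (x * y, a * b) \<in> \<Union>C" by blast
  qed
qed

lemma maximal_partial_emb_total:
  assumes K: "is_subfield K" and AC: "is_alg_closure_of K" and M: "partial_emb K M"
    and max: "\<And>G. partial_emb K G \<Longrightarrow> M \<subseteq> G \<Longrightarrow> G = M"
  shows "Domain M = UNIV"
proof (rule ccontr)
  assume "Domain M \<noteq> UNIV"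
  then obtain y where y: "y \<notin> Domain M" by blast
  define D where "D = Domain M"
  have D: "is_subfield D" using partial_emb_subfield[OF M] D_def by simp
  obtain p where "p \<noteq> 0" "poly_over K p" "poly p y = 0" using is_alg_closure_ofD(2)[OF AC] by blast
  hence "\<exists>p. p \<noteq> 0 \<and> poly_over D p \<and> poly p y = 0"
    using partial_emb_Domain[OF M] poly_over_mono unfolding D_def by blast
  then obtain mu where mu: "poly_over D mu" "poly mu y = 0" "lead_coeff mu = 1"
    "\<forall>g. poly_over D g \<longrightarrow> poly g y = 0 \<longrightarrow> (\<exists>q. poly_over D q \<and> g = mu * q)"
    using minimal_poly_over_exists[OF D] by blast
  have "hom_on D (graph_fun M)" using partial_emb_hom_on[OF K M] D_def by simp
  then have "degree (map_poly (graph_fun M) mu) > 0"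
    using degree_map_poly_hom_on[OF D _ mu(1)] monic_root_degree_pos[OF mu(3,2)] by metis
  then obtain z where "poly (map_poly (graph_fun M) mu) z = 0"
    using is_alg_closure_ofD(1)[OF AC] by blast
  then have "\<exists>G. partial_emb K G \<and> M \<subseteq> G \<and> (y, z) \<in> G"
    using partial_emb_extend[OF K M is_alg_closure_ofD(2)[OF AC], of mu y z] mu unfolding D_def by blast
  then obtain G where G: "partial_emb K G" "M \<subseteq> G" "(y, z) \<in> G" by blast
  then have "G = M" using max by blast
  with G(3) y show False by blast
qed

text \<open>A \<open>K\<close>-endomorphism of an algebraic extension permutes the finitely many roots of each
  polynomial over \<open>K\<close>, hence is onto.\<close>

lemma alg_closure_endo_bij:
  assumes AC: "is_alg_closure_of K" and s: "hom_on UNIV s" and sK: "\<And>x. x \<in> K \<Longrightarrow> s x = x"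
  shows "bij s"
proof -
  have hsK: "hom_on K s" using s unfolding hom_on_def by blast
  have inj: "inj s" by (rule hom_on_inj_on[OF subfield_UNIV s])
  have "w \<in> range s" for w
  proof -
    obtain p where p: "p \<noteq> 0" "poly_over K p" "poly p w = 0"
      using is_alg_closure_ofD(2)[OF AC] by blast
    define R where "R = {r. poly p r = 0}"
    have fin: "finite R" using poly_roots_finite[OF p(1)] R_def by simp
    have "s ` R \<subseteq> R"
    proof
      fix u assume "u \<in> s ` R"
      then obtain r where r: "r \<in> R" "u = s r" by blast
      have "s (poly p r) = poly (map_poly s p) (s r)"
        using poly_map_poly_hom_on[OF subfield_UNIV s _ poly_over_mono[OF p(2)]] by simp
      also have "map_poly s p = p" using map_poly_hom_on_fixed[OF _ hsK p(2)] sK by simp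
      finally show "u \<in> R" using r hom_on_0[OF s] unfolding R_def by simp
    qed
    then have "s ` R = R"
      using endo_inj_surj[OF fin] inj_on_subset[OF inj] by blast
    moreover have "w \<in> R" using p(3) unfolding R_def by simp
    ultimately show "w \<in> range s" by blast
  qed
  then have "surj s" by blast
  with inj show ?thesis by (simp add: bij_def)
qed

lemma partial_emb_extends_to_Gal:
  assumes K: "is_subfield K" and AC: "is_alg_closure_of K" and G0: "partial_emb K G0"
  shows "\<exists>s\<in>Gal_cl K. \<forall>x b. (x, b) \<in> G0 \<longrightarrow> s x = b"
proof -
  define A where "A = {G. partial_emb K G \<and> G0 \<subseteq> G}"
  have "\<forall>C\<in>chains A. \<exists>U\<in>A. \<forall>X\<in>C. X \<subseteq> U"
  proof
    fix C assume C: "C \<in> chains A"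
    show "\<exists>U\<in>A. \<forall>X\<in>C. X \<subseteq> U"
    proof (cases "C = {}")
      case True
      with G0 show ?thesis unfolding A_def by blast
    next
      case False
      have "C \<subseteq> A" "chain\<^sub>\<subseteq> C" using C unfolding chains_def by auto
      then have "partial_emb K (\<Union>C)" "G0 \<subseteq> \<Union>C"
        using partial_emb_Union_chain[OF False, of K] False unfolding A_def by blast+
      then show ?thesis unfolding A_def by blast
    qed
  qed
  then obtain M where M: "M \<in> A" and max: "\<forall>X\<in>A. M \<subseteq> X \<longrightarrow> X = M"
    using Zorn_Lemma2 by blast
  have pM: "partial_emb K M" and G0M: "G0 \<subseteq> M" using M unfolding A_def by simp_all
  have "G = M" if "partial_emb K G" "M \<subseteq> G" for G
    using max that G0M unfolding A_def by blast
  then have "Domain M = UNIV" by (rule maximal_partial_emb_total[OF K AC pM])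
  then have hs: "hom_on UNIV (graph_fun M)" using partial_emb_hom_on[OF K pM] by simp
  have "graph_fun M \<in> Gal_cl K"
    using alg_closure_endo_bij[OF AC hs] partial_emb_fixes[OF pM]
    by (intro Gal_clI) (simp_all add: hom_on_add[OF hs] hom_on_mult[OF hs])
  moreover have "graph_fun M x = b" if "(x, b) \<in> G0" for x b
    using that G0M partial_emb_graph_fun[OF pM] by blast
  ultimately show ?thesis by blast
qed

section \<open>The fixed field of the automorphism group of the closure of a perfect field\<close>

lemma coeff_monom_plus_const_power:
  fixes a :: "'a::comm_semiring_1"
  assumes "i \<le> e" "p > 0"
  shows "coeff ((monom 1 p + [:a:]) ^ e) (i * p) = of_nat (e choose i) * a ^ (e - i)"
proof -
  have "coeff ((monom 1 p + [:a:]) ^ e) (i * p) =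
      (\<Sum>k\<le>e. coeff (of_nat (e choose k) * monom 1 p ^ k * [:a:] ^ (e - k)) (i * p))"
    by (subst binomial_ring) (simp add: coeff_sum)
  also have "\<dots> = (\<Sum>k\<le>e. (if k = i then of_nat (e choose k) * a ^ (e - k) else 0))"
  proof (intro sum.cong refl)
    fix k assume "k \<in> {..e}"
    have "of_nat (e choose k) * monom 1 p ^ k * [:a:] ^ (e - k) = monom (of_nat (e choose k) * a ^ (e - k)) (p * k)"
    proof -
      have "of_nat (e choose k) * monom 1 p ^ k * [:a:] ^ (e - k) = smult (of_nat (e choose k)) (smult (a ^ (e - k)) (monom 1 (p * k)))"
        by (simp add: of_nat_poly monom_power poly_const_pow mult.commute[of _ "[:_:]"] mult.commute[of "a ^ _"])
      thus ?thesis by (simp add: smult_monom)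
    qed
    thus "coeff (of_nat (e choose k) * monom 1 p ^ k * [:a:] ^ (e - k)) (i * p) =
        (if k = i then of_nat (e choose k) * a ^ (e - k) else 0)"
      using assms(2) by (simp add: coeff_monom mult.commute)
  qed
  also have "\<dots> = of_nat (e choose i) * a ^ (e - i)" using assms(1) by simp
  finally show ?thesis .
qed

lemma coeff_linear_power_frobenius:
  fixes x :: "'a::field"
  assumes p: "prime CHAR('a)" and i: "i \<le> e"
  shows "coeff ([:-x, 1:] ^ (CHAR('a) * e)) (i * CHAR('a)) = coeff ([:(-x) ^ CHAR('a), 1:] ^ e) i"
proof -
  let ?p = "CHAR('a)"
  have "[:-x, 1:] ^ ?p = (monom 1 1 + [:-x:]) ^ ?p" by (simp add: monom_altdef)
  also have "\<dots> = monom 1 ?p + [:(-x) ^ ?p:]"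
    using freshmans_dream[where 'a = "'a poly" and x = "monom 1 1" and y = "[:-x:]"] p
    by (simp add: monom_power poly_const_pow)
  finally have "coeff ([:-x, 1:] ^ (?p * e)) (i * ?p) = coeff ((monom 1 ?p + [:(-x) ^ ?p:]) ^ e) (i * ?p)"
    by (simp add: power_mult)
  also have "\<dots> = of_nat (e choose i) * ((-x) ^ ?p) ^ (e - i)"
    using coeff_monom_plus_const_power[OF i] p prime_gt_0_nat by blast
  also have "\<dots> = coeff ([:(-x) ^ ?p, 1:] ^ e) i"
    using coeff_linear_poly_power[OF i, of "(-x) ^ ?p" 1] by simp
  finally show ?thesis .
qed

lemma perfect_subfield_pth_root:
  fixes x :: "'a::field"
  assumes K: "perfect_subfield K" and p: "prime CHAR('a)" and x: "x ^ CHAR('a) \<in> K"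
  shows "x \<in> K"
proof -
  have "CHAR('a) \<noteq> 0" using p by auto
  then have "\<forall>x\<in>K. \<exists>y\<in>K. y ^ CHAR('a) = x" using K unfolding perfect_subfield_def by simp
  then obtain y where y: "y \<in> K" "y ^ CHAR('a) = x ^ CHAR('a)" using x by blast
  have "(y + - x) ^ CHAR('a) = y ^ CHAR('a) + (- x) ^ CHAR('a)"
    using freshmans_dream p by blast
  also have "\<dots> = 0" using y(2) minus_power_prime_CHAR[OF refl p, of x] by simp
  finally have "x = y" by simp
  with y(1) show ?thesis by simp
qed

text \<open>In characteristic \<open>p\<close> dividing \<open>d\<close>, the coefficients of \<open>(X - x)\<^sup>d\<close> at multiples of \<open>p\<close>
  are those of \<open>(X - (-x)\<^sup>p)\<^sup>d\<^sup>/\<^sup>p\<close>, so induction on \<open>d\<close> puts \<open>(-x)\<^sup>p\<close> in \<open>K\<close>, and then \<open>x\<close>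
  because \<open>K\<close> is perfect.\<close>

lemma perfect_subfield_linear_power_root:
  fixes K :: "'a::field set"
  assumes K: "perfect_subfield K"
  shows "d > 0 \<Longrightarrow> (\<forall>i. coeff ([:-x, 1:] ^ d) i \<in> K) \<Longrightarrow> x \<in> K"
proof (induction d arbitrary: x rule: less_induct)
  case (less d)
  have sK: "is_subfield K" using K unfolding perfect_subfield_def by blast
  show ?case
  proof (cases "of_nat d = (0::'a)")
    case False
    have "d choose (d - 1) = d"
      using binomial_symmetric[of "d - 1" d] less.prems(1) by simp
    then have "coeff ([:-x, 1:] ^ d) (d - 1) = of_nat d * (- x)"
      using coeff_linear_poly_power[of "d - 1" d "-x" 1] less.prems(1) by simp
    then have "of_nat d * (- x) \<in> K" using less.prems(2) by metis
    then have "- (of_nat d * (- x)) / of_nat d \<in> K"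
      using sK subfield_divide subfield_uminus subfield_of_nat by blast
    with False show ?thesis by simp
  next
    case True
    define p where "p = CHAR('a)"
    have "p dvd d" using True of_nat_eq_0_iff_char_dvd p_def by blast
    then have "p > 0" using less.prems(1) by (cases "p = 0") auto
    then have pp: "prime p" using prime_CHAR_semidom[where 'a='a] p_def by simp
    obtain e where e: "d = p * e" using \<open>p dvd d\<close> by blast
    have e0: "e > 0" using e less.prems(1) by (cases "e = 0") auto
    have ed: "e < d" using e e0 prime_ge_2_nat[OF pp] by simp
    have "\<forall>i. coeff ([:-(-((-x) ^ p)), 1:] ^ e) i \<in> K"
    proof
      fix i
      show "coeff ([:-(-((-x) ^ p)), 1:] ^ e) i \<in> K"
      proof (cases "i \<le> e")
        case True
        then have "coeff ([:(-x) ^ p, 1:] ^ e) i = coeff ([:-x, 1:] ^ d) (i * p)"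
          using coeff_linear_power_frobenius[of i e x] pp e p_def by simp
        then show ?thesis using less.prems(2) by simp
      next
        case False
        then show ?thesis by (simp add: coeff_eq_0 degree_linear_power subfield_zero[OF sK])
      qed
    qed
    then have "- ((-x) ^ p) \<in> K" by (rule less.IH[OF ed e0])
    then have "(-x) ^ CHAR('a) \<in> K" using subfield_uminus[OF sK] p_def by fastforce
    then have "-x \<in> K" using perfect_subfield_pth_root[OF K] pp p_def by blast
    then show ?thesis using subfield_uminus[OF sK] by fastforce
  qed
qed

lemma monic_unique_root_eq_power:
  fixes x :: "'a::field"
  assumes cl: "\<forall>p::'a poly. degree p > 0 \<longrightarrow> (\<exists>x. poly p x = 0)"
  shows "lead_coeff p = 1 \<Longrightarrow> (\<forall>z. poly p z = 0 \<longrightarrow> z = x) \<Longrightarrow> p = [:-x, 1:] ^ degree p"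
proof (induction "degree p" arbitrary: p)
  case 0
  hence "p = [:coeff p 0:]" "coeff p 0 = 1" using degree_0_id[of p] by auto
  then show ?case using 0 by (simp add: one_pCons)
next
  case (Suc n)
  then obtain r where "poly p r = 0" using cl by (metis zero_less_Suc)
  hence "r = x" using Suc.prems by blast
  hence "[:-x, 1:] dvd p" using \<open>poly p r = 0\<close> poly_eq_0_iff_dvd by blast
  then obtain q where q: "p = [:-x, 1:] * q" by blast
  have q0: "q \<noteq> 0" using q Suc.prems(1) by auto
  have "degree ([:-x, 1:] * q) = degree [:-x, 1:] + degree q" by (rule degree_mult_eq) (auto simp: q0)
  hence dq: "degree q = n" using q Suc.hyps(2) by simp
  have "lead_coeff ([:-x, 1:] * q) = lead_coeff [:-x, 1:] * lead_coeff q" by (rule lead_coeff_mult)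
  hence lq: "lead_coeff q = 1" using q Suc.prems(1) by simp
  have rq: "\<forall>z. poly q z = 0 \<longrightarrow> z = x" using Suc.prems(2) q by simp
  have "q = [:-x, 1:] ^ n" using Suc.hyps(1)[OF dq[symmetric] lq rq] dq by simp
  hence "p = [:-x, 1:] ^ Suc n" using q by (simp only: power_Suc)
  thus ?case using Suc.hyps(2) by simp
qed

lemma perfect_subfield_other_root:
  assumes AC: "is_alg_closure_of K" and P: "perfect_subfield K"
    and mu: "poly_over K mu" "lead_coeff mu = 1" "poly mu x = 0" and x: "x \<notin> K"
  shows "\<exists>z. poly mu z = 0 \<and> z \<noteq> x"
proof (rule ccontr)
  assume "\<not> ?thesis"
  then have "mu = [:-x, 1:] ^ degree mu"
    using monic_unique_root_eq_power[OF is_alg_closure_ofD(1)[OF AC] mu(2)] by blast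
  then have "\<forall>i. coeff ([:-x, 1:] ^ degree mu) i \<in> K"
    using mu(1) unfolding poly_over_def by metis
  then have "x \<in> K"
    using perfect_subfield_linear_power_root[OF P] monic_root_degree_pos[OF mu(2,3)] by blast
  with x show False by simp
qed

lemma Gal_cl_fixed_imp_mem:
  assumes AC: "is_alg_closure_of K" and P: "perfect_subfield K"
    and fixed: "\<forall>s\<in>Gal_cl K. s x = x"
  shows "x \<in> K"
proof (rule ccontr)
  assume x: "x \<notin> K"
  have K: "is_subfield K" using P unfolding perfect_subfield_def by blast
  obtain p where "p \<noteq> 0" "poly_over K p" "poly p x = 0"
    using is_alg_closure_ofD(2)[OF AC] by blast
  then obtain mu where mu: "poly_over K mu" "poly mu x = 0" "lead_coeff mu = 1"
      "\<forall>g. poly_over K g \<longrightarrow> poly g x = 0 \<longrightarrow> (\<exists>q. poly_over K q \<and> g = mu * q)"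
    using minimal_poly_over_exists[OF K] by blast
  obtain z where z: "poly mu z = 0" "z \<noteq> x"
    using perfect_subfield_other_root[OF AC P mu(1,3,2) x] by blast
  have G0: "partial_emb K (Id_on K)" by (rule partial_emb_Id_on[OF K])
  have dom: "Domain (Id_on K) = K" by blast
  have hom: "hom_on K (graph_fun (Id_on K))" using partial_emb_hom_on[OF K G0] dom by simp
  have map: "map_poly (graph_fun (Id_on K)) mu = mu"
    by (rule map_poly_hom_on_fixed[OF partial_emb_fixes[OF G0] hom mu(1)])
  have "\<exists>G. partial_emb K G \<and> Id_on K \<subseteq> G \<and> (x, z) \<in> G"
    using partial_emb_extend[OF K G0 is_alg_closure_ofD(2)[OF AC], of mu x z] mu z(1) map
    unfolding dom by simp
  then obtain G where G: "partial_emb K G" "(x, z) \<in> G" by blast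
  then obtain s where "s \<in> Gal_cl K" "s x = z"
    using partial_emb_extends_to_Gal[OF K AC] by blast
  with fixed z(2) show False by blast
qed

section \<open>Galois descent and Dedekind's lemma\<close>

lemma card_support_less:
  assumes "finite I" "i0 \<in> I" "c i0 \<noteq> 0" "{i\<in>I. d i \<noteq> 0} \<subseteq> {i\<in>I. c i \<noteq> 0} - {i0}"
  shows "card {i\<in>I. d i \<noteq> 0} < card {i\<in>I. c i \<noteq> 0}"
proof -
  have "card {i\<in>I. d i \<noteq> 0} \<le> card ({i\<in>I. c i \<noteq> 0} - {i0})"
    by (rule card_mono) (use assms in auto)
  also have "\<dots> < card {i\<in>I. c i \<noteq> 0}"
    by (rule card_Diff1_less) (use assms in auto)
  finally show ?thesis .
qed

lemma Gal_cl_conj_solution: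
  assumes closed: "\<And>r s. r \<in> S \<Longrightarrow> s \<in> Gal_cl K \<Longrightarrow> (\<lambda>j. s (r j)) \<in> S"
    and s: "s \<in> Gal_cl K" and sol: "\<forall>r\<in>S. (\<Sum>j<m. c j * r j) = 0"
  shows "\<forall>r\<in>S. (\<Sum>j<m. s (c j) * r j) = 0"
proof
  fix r assume r: "r \<in> S"
  have "(\<Sum>j<m. s (c j) * r j) = s (\<Sum>j<m. c j * inv s (r j))"
    by (simp add: Gal_cl_sum[OF s] Gal_cl_mult[OF s] Gal_cl_inv_app[OF s])
  also have "(\<Sum>j<m. c j * inv s (r j)) = 0" using bspec[OF sol closed[OF r Gal_cl_inv[OF s]]] by simp
  finally show "(\<Sum>j<m. s (c j) * r j) = 0" using hom_on_0[OF Gal_cl_hom_on[OF s]] by simp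
qed

text \<open>Artin's descent: normalise a solution of minimal support to have a coefficient \<open>1\<close>;
  its difference with a conjugate is a solution of smaller support, so it is fixed by \<open>G\<close>.\<close>

lemma Gal_cl_descent:
  fixes K :: "'a::field set" and S :: "(nat \<Rightarrow> 'a) set"
  assumes fixK: "\<And>x. (\<forall>s\<in>Gal_cl K. s x = x) \<Longrightarrow> x \<in> K"
    and closed: "\<And>r s. r \<in> S \<Longrightarrow> s \<in> Gal_cl K \<Longrightarrow> (\<lambda>j. s (r j)) \<in> S"
    and Ksol: "\<And>c. (\<forall>j<m. c j \<in> K) \<Longrightarrow> (\<forall>r\<in>S. (\<Sum>j<m. c j * r j) = 0) \<Longrightarrow> (\<forall>j<m. c j = 0)"
  shows "(\<forall>r\<in>S. (\<Sum>j<m. c j * r j) = 0) \<Longrightarrow> \<forall>j<m. c j = 0"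
proof (induction "card {j\<in>{..<m}. c j \<noteq> 0}" arbitrary: c rule: less_induct)
  case less
  show ?case
  proof (rule ccontr)
    assume "\<not> (\<forall>j<m. c j = 0)"
    then obtain j0 where j0: "j0 < m" "c j0 \<noteq> 0" by blast
    define c' where "c' j = c j / c j0" for j
    have sol': "\<forall>r\<in>S. (\<Sum>j<m. c' j * r j) = 0"
    proof
      fix r assume "r \<in> S"
      then have "(\<Sum>j<m. c j * r j) / c j0 = 0" using less.prems by simp
      then show "(\<Sum>j<m. c' j * r j) = 0" unfolding c'_def by (simp add: sum_divide_distrib)
    qed
    have c'1: "c' j0 = 1" using j0 c'_def by simp
    have "\<not> (\<forall>j<m. c' j \<in> K)"
    proof
      assume "\<forall>j<m. c' j \<in> K"
      then have "c' j0 = 0" using Ksol sol' j0(1) by blast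
      with c'1 show False by simp
    qed
    then obtain j1 s where j1: "j1 < m" and s: "s \<in> Gal_cl K" "s (c' j1) \<noteq> c' j1"
      using fixK by blast
    have hs: "hom_on UNIV s" using Gal_cl_hom_on[OF s(1)] .
    define d where "d j = s (c' j) - c' j" for j
    have "\<forall>r\<in>S. (\<Sum>j<m. d j * r j) = 0"
    proof
      fix r assume r: "r \<in> S"
      have "\<forall>r\<in>S. (\<Sum>j<m. s (c' j) * r j) = 0"
        by (rule Gal_cl_conj_solution[OF _ s(1) sol'], rule closed)
      with r have "(\<Sum>j<m. s (c' j) * r j) = 0" by blast
      with r sol' show "(\<Sum>j<m. d j * r j) = 0" unfolding d_def by (simp add: left_diff_distrib sum_subtractf)
    qed
    moreover have "{j\<in>{..<m}. d j \<noteq> 0} \<subseteq> {j\<in>{..<m}. c j \<noteq> 0} - {j0}"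
      using c'1 hom_on_0[OF hs] hom_on_1[OF hs] unfolding d_def c'_def by auto
    then have "card {j\<in>{..<m}. d j \<noteq> 0} < card {j\<in>{..<m}. c j \<noteq> 0}"
      by (rule card_support_less[rotated 3]) (use j0 in auto)
    ultimately have "\<forall>j<m. d j = 0" using less.hyps by blast
    with j1 s(2) show False unfolding d_def by simp
  qed
qed

lemma dedekind_independence:
  fixes L :: "'a::field set" and tau :: "'i \<Rightarrow> 'a \<Rightarrow> 'a"
  assumes fin: "finite I"
    and mult: "\<And>i x y. i \<in> I \<Longrightarrow> x \<in> L \<Longrightarrow> y \<in> L \<Longrightarrow> tau i (x * y) = tau i x * tau i y"
    and one: "\<And>i. i \<in> I \<Longrightarrow> tau i 1 = 1" and L1: "1 \<in> L"
    and Lm: "\<And>x y. x \<in> L \<Longrightarrow> y \<in> L \<Longrightarrow> x * y \<in> L"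
    and dist: "\<And>i j. i \<in> I \<Longrightarrow> j \<in> I \<Longrightarrow> i \<noteq> j \<Longrightarrow> \<exists>x\<in>L. tau i x \<noteq> tau j x"
  shows "(\<forall>x\<in>L. (\<Sum>i\<in>I. c i * tau i x) = 0) \<Longrightarrow> \<forall>i\<in>I. c i = 0"
proof (induction "card {i\<in>I. c i \<noteq> 0}" arbitrary: c rule: less_induct)
  case less
  show ?case
  proof (rule ccontr)
    assume "\<not> (\<forall>i\<in>I. c i = 0)"
    then obtain i0 where i0: "i0 \<in> I" "c i0 \<noteq> 0" by blast
    show False
    proof (cases "\<exists>j0\<in>I. j0 \<noteq> i0 \<and> c j0 \<noteq> 0")
      case False
      have "(\<Sum>i\<in>I. c i * tau i 1) = 0" using less.prems L1 by blast
      moreover have "(\<Sum>i\<in>I. c i * tau i 1) = c i0 * tau i0 1"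
        by (rule sum.remove[OF fin i0(1), THEN trans]) (use False in \<open>auto intro!: sum.neutral\<close>)
      ultimately show False using one[OF i0(1)] i0(2) by simp
    next
      case True
      then obtain j0 where j0: "j0 \<in> I" "j0 \<noteq> i0" "c j0 \<noteq> 0" by blast
      obtain x0 where x0: "x0 \<in> L" "tau j0 x0 \<noteq> tau i0 x0" using dist[OF j0(1) i0(1) j0(2)] by blast
      define d where "d i = c i * (tau i x0 - tau i0 x0)" for i
      have sold: "\<forall>x\<in>L. (\<Sum>i\<in>I. d i * tau i x) = 0"
      proof
        fix x assume x: "x \<in> L"
        have e1: "(\<Sum>i\<in>I. c i * tau i (x0 * x)) = 0" using less.prems Lm[OF x0(1) x] by blast
        have e2: "(\<Sum>i\<in>I. c i * tau i x) = 0" using less.prems x by blast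
        have "(\<Sum>i\<in>I. d i * tau i x) = (\<Sum>i\<in>I. c i * tau i (x0 * x)) - tau i0 x0 * (\<Sum>i\<in>I. c i * tau i x)"
          unfolding d_def by (simp add: mult[OF _ x0(1) x] sum_distrib_left algebra_simps sum_subtractf)
        thus "(\<Sum>i\<in>I. d i * tau i x) = 0" using e1 e2 by simp
      qed
      have "{i\<in>I. d i \<noteq> 0} \<subseteq> {i\<in>I. c i \<noteq> 0} - {i0}" unfolding d_def by auto
      then have "card {i\<in>I. d i \<noteq> 0} < card {i\<in>I. c i \<noteq> 0}"
        by (rule card_support_less[rotated 3]) (use fin i0 in auto)
      hence "\<forall>i\<in>I. d i = 0" using less.hyps sold by blast
      hence "d j0 = 0" using j0(1) by blast
      thus False using j0(3) x0(2) d_def by simp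
    qed
  qed
qed

definition fscale :: "'a::field \<Rightarrow> ('b \<Rightarrow> 'a) \<Rightarrow> ('b \<Rightarrow> 'a)" where
  "fscale c f = (\<lambda>i. c * f i)"

interpretation fun_vs: vector_space "fscale :: 'a::field \<Rightarrow> ('b \<Rightarrow> 'a) \<Rightarrow> ('b \<Rightarrow> 'a)"
  by unfold_locales (auto simp: fscale_def fun_eq_iff algebra_simps)

lemma sum_fun_apply: "(\<Sum>v\<in>t. f v) (i::'b) = (\<Sum>v\<in>t. f v i)" for f :: "'c \<Rightarrow> 'b \<Rightarrow> 'a::comm_monoid_add"
  by (induction t rule: infinite_finite_induct) auto

lemma fun_vs_independentI:
  fixes V :: "('b \<Rightarrow> 'a::field) set"
  assumes "\<And>t c. finite t \<Longrightarrow> t \<subseteq> V \<Longrightarrow> (\<forall>i. (\<Sum>v\<in>t. c v * v i) = 0) \<Longrightarrow> (\<forall>v\<in>t. c v = 0)"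
  shows "fun_vs.independent V"
  unfolding fun_vs.independent_explicit_module
proof (intro allI impI)
  fix t u v assume t: "finite t" "t \<subseteq> V" "(\<Sum>v\<in>t. fscale (u v) v) = 0" "v \<in> t"
  have "\<forall>i. (\<Sum>v\<in>t. u v * v i) = 0"
  proof
    fix i
    have "(\<Sum>v\<in>t. fscale (u v) v) i = 0" using t(3) by simp
    thus "(\<Sum>v\<in>t. u v * v i) = 0" by (simp add: sum_fun_apply fscale_def)
  qed
  thus "u v = 0" using assms[OF t(1,2)] t(4) by blast
qed

lemma fun_vs_card_independent_le:
  fixes V :: "(nat \<Rightarrow> 'a::field) set"
  assumes supp: "\<And>v i. v \<in> V \<Longrightarrow> i \<ge> m \<Longrightarrow> v i = 0"
    and ind: "fun_vs.independent V"
  shows "finite V \<and> card V \<le> m"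
proof -
  define e where "e j = (\<lambda>i::nat. if i = j then (1::'a) else 0)" for j :: nat
  define E where "E = e ` {..<m}"
  have "V \<subseteq> fun_vs.span E"
  proof
    fix v assume v: "v \<in> V"
    have "(\<Sum>j<m. fscale (v j) (e j)) \<in> fun_vs.span E"
      by (intro fun_vs.span_sum fun_vs.span_scale fun_vs.span_base) (auto simp: E_def)
    moreover have "(\<Sum>j<m. fscale (v j) (e j)) = v"
    proof
      fix i
      show "(\<Sum>j<m. fscale (v j) (e j)) i = v i"
      proof (cases "i < m")
        case True
        show ?thesis using True by (simp add: sum_fun_apply fscale_def e_def if_distrib cong: if_cong)
      next
        case False
        have "(\<Sum>j<m. fscale (v j) (e j)) i = 0" using False by (simp add: sum_fun_apply fscale_def e_def)
        thus ?thesis using supp[OF v] False by simp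
      qed
    qed
    ultimately show "v \<in> fun_vs.span E" by simp
  qed
  moreover note ind
  moreover have "finite E" unfolding E_def by simp
  ultimately have "finite V \<and> card V \<le> card E" using fun_vs.independent_span_bound[of E V] by simp
  moreover have "card E \<le> m" unfolding E_def using card_image_le[of "{..<m}" e] by simp
  ultimately show ?thesis by simp
qed

lemma fun_vs_independent_family:
  fixes r :: "nat \<Rightarrow> ('b \<Rightarrow> 'a::field)"
  assumes A: "\<And>c. (\<forall>x. (\<Sum>i<m. c i * r i x) = 0) \<Longrightarrow> \<forall>i<m. c i = 0"
  shows "inj_on r {..<m}" "fun_vs.independent (r ` {..<m})"
proof -
  show inj: "inj_on r {..<m}"
  proof (rule inj_onI, rule ccontr)
    fix i k assume ik: "i \<in> {..<m}" "k \<in> {..<m}" "r i = r k" "i \<noteq> k"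
    define c where "c l = (if l = i then 1 else if l = k then -1 else (0::'a))" for l
    have "\<forall>x. (\<Sum>l<m. c l * r l x) = 0"
    proof
      fix x
      have "(\<Sum>l<m. c l * r l x) = (\<Sum>l<m. (if l = i then r i x else 0) + (if l = k then - r k x else 0))"
        by (rule sum.cong) (use ik in \<open>auto simp: c_def\<close>)
      also have "\<dots> = r i x - r k x" using ik by (simp add: sum.distrib)
      finally show "(\<Sum>l<m. c l * r l x) = 0" using ik by simp
    qed
    hence "c i = 0" using A ik by blast
    thus False by (simp add: c_def)
  qed
  show "fun_vs.independent (r ` {..<m})"
  proof (rule fun_vs_independentI)
    fix t c assume t: "finite t" "t \<subseteq> r ` {..<m}" "\<forall>x. (\<Sum>v\<in>t. c v * v x) = 0"
    define J where "J = {i. i < m \<and> r i \<in> t}"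
    have tJ: "t = r ` J" using t(2) unfolding J_def by auto
    have injJ: "inj_on r J" using inj unfolding J_def by (rule inj_on_subset) auto
    define c' where "c' i = (if i \<in> J then c (r i) else 0)" for i
    have "\<forall>x. (\<Sum>i<m. c' i * r i x) = 0"
    proof
      fix x
      have "(\<Sum>i<m. c' i * r i x) = (\<Sum>i\<in>J. c (r i) * r i x)"
        unfolding c'_def by (rule sum.mono_neutral_cong_right) (auto simp: J_def)
      also have "\<dots> = (\<Sum>v\<in>t. c v * v x)" unfolding tJ using sum.reindex[OF injJ, of "\<lambda>v. c v * v x"] by simp
      finally show "(\<Sum>i<m. c' i * r i x) = 0" using t(3) by simp
    qed
    hence c'0: "\<forall>i<m. c' i = 0" by (rule A)
    show "\<forall>v\<in>t. c v = 0"
    proof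
      fix v assume "v \<in> t"
      then obtain i where "i \<in> J" "v = r i" using tJ by blast
      thus "c v = 0" using c'0 unfolding c'_def J_def by auto
    qed
  qed
qed

lemma card_ge_if_columns_independent:
  fixes V :: "'b set" and w :: "nat \<Rightarrow> 'b \<Rightarrow> 'a::field"
  assumes fin: "finite V"
    and inj_sol: "\<And>c. (\<forall>v\<in>V. (\<Sum>j<m. c j * w j v) = 0) \<Longrightarrow> \<forall>j<m. c j = 0"
  shows "m \<le> card V"
proof -
  define col where "col j = (\<lambda>v. if v \<in> V then w j v else 0)" for j
  have A: "\<forall>j<m. c j = 0" if "\<forall>x. (\<Sum>j<m. c j * col j x) = 0" for c
  proof -
    have "\<forall>v\<in>V. (\<Sum>j<m. c j * w j v) = 0"
    proof
      fix v assume "v \<in> V"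
      thus "(\<Sum>j<m. c j * w j v) = 0" using spec[OF that, of v] unfolding col_def by simp
    qed
    thus ?thesis by (rule inj_sol)
  qed
  note fam = fun_vs_independent_family[where m = m and r = col, OF A]
  define d where "d v = (\<lambda>u. if u = v then (1::'a) else 0)" for v :: 'b
  have "col ` {..<m} \<subseteq> fun_vs.span (d ` V)"
  proof
    fix f assume "f \<in> col ` {..<m}"
    then obtain j where j: "f = col j" by blast
    have "(\<Sum>v\<in>V. fscale (w j v) (d v)) \<in> fun_vs.span (d ` V)"
      by (intro fun_vs.span_sum fun_vs.span_scale fun_vs.span_base) auto
    moreover have "(\<Sum>v\<in>V. fscale (w j v) (d v)) = col j"
    proof
      fix u
      show "(\<Sum>v\<in>V. fscale (w j v) (d v)) u = col j u"
        using fin by (simp add: sum_fun_apply fscale_def d_def col_def if_distrib cong: if_cong)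
    qed
    ultimately show "f \<in> fun_vs.span (d ` V)" using j by simp
  qed
  hence "card (col ` {..<m}) \<le> card (d ` V)"
    using fun_vs.independent_span_bound[of "d ` V" "col ` {..<m}"] fam(2) fin by simp
  also have "\<dots> \<le> card V" by (rule card_image_le[OF fin])
  finally show ?thesis using card_image[OF fam(1)] by simp
qed

lemma square_system_solvable:
  fixes M :: "nat \<Rightarrow> nat \<Rightarrow> 'a::field"
  assumes inj: "\<And>c. (\<forall>j<m. (\<Sum>i<m. c i * M i j) = 0) \<Longrightarrow> \<forall>i<m. c i = 0"
  shows "\<exists>c. \<forall>j<m. (\<Sum>i<m. c i * M i j) = t j"
proof -
  define r where "r i = (\<lambda>j. if j < m then M i j else 0)" for i
  have A: "\<forall>i<m. c i = 0" if "\<forall>x. (\<Sum>i<m. c i * r i x) = 0" for c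
  proof -
    have "\<forall>j<m. (\<Sum>i<m. c i * M i j) = 0"
    proof (intro allI impI)
      fix j assume "j < m"
      thus "(\<Sum>i<m. c i * M i j) = 0" using spec[OF that, of j] unfolding r_def by simp
    qed
    thus ?thesis by (rule inj)
  qed
  note fam = fun_vs_independent_family[where m = m and r = r, OF A]
  define R where "R = r ` {..<m}"
  define t' where "t' = (\<lambda>j. if j < m then t j else 0)"
  have "t' \<in> fun_vs.span R"
  proof (rule ccontr)
    assume nt: "t' \<notin> fun_vs.span R"
    hence ind: "fun_vs.independent (insert t' R)" using fun_vs.independent_insertI fam(2) R_def by blast
    have cle: "finite (insert t' R) \<and> card (insert t' R) \<le> m"
      by (rule fun_vs_card_independent_le[OF _ ind]) (auto simp: R_def r_def t'_def)
    have tR: "t' \<notin> R" using nt fun_vs.span_base by blast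
    have cR: "card R = m" unfolding R_def using card_image[OF fam(1)] by simp
    have fR: "finite R" unfolding R_def by simp
    have "card (insert t' R) = Suc (card R)" using card_insert_disjoint[OF fR tR] .
    thus False using cle cR by simp
  qed
  moreover have "finite R" unfolding R_def by simp
  ultimately obtain u where u: "t' = (\<Sum>v\<in>R. fscale (u v) v)" using fun_vs.span_finite by blast
  define c where "c i = u (r i)" for i
  have "\<forall>j<m. (\<Sum>i<m. c i * M i j) = t j"
  proof (intro allI impI)
    fix j assume j: "j < m"
    have "t j = t' j" using j t'_def by simp
    also have "\<dots> = (\<Sum>v\<in>R. u v * v j)" using u by (simp add: sum_fun_apply fscale_def)
    also have "\<dots> = (\<Sum>i<m. u (r i) * r i j)" unfolding R_def by (rule sum.reindex[OF fam(1), simplified])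
    also have "\<dots> = (\<Sum>i<m. c i * M i j)" using j by (simp add: c_def r_def)
    finally show "(\<Sum>i<m. c i * M i j) = t j" by simp
  qed
  thus ?thesis by blast
qed

lemma is_basis_mult_image_iff:
  fixes h :: "'a::field \<Rightarrow> 'a"
  assumes inj: "inj_on h F" and zero: "0 \<in> F" "h 0 = 0"
  shows "is_basis F (\<lambda>a v. h a * v) S B \<longleftrightarrow> is_basis (h ` F) (*) S B"
proof -
  define h' where "h' = inv_into F h"
  have h': "h' c \<in> F" "h (h' c) = c" if "c \<in> h ` F" for c
    using that unfolding h'_def by (auto simp: inv_into_into f_inv_into_f)
  have h_eq_0: "a = 0" if "a \<in> F" "h a = 0" for a
    using inj_onD[OF inj _ that(1) zero(1)] that(2) zero(2) by simp
  have ind: "(\<forall>c. (\<forall>b\<in>B. c b \<in> F) \<longrightarrow> (\<Sum>b\<in>B. h (c b) * b) = 0 \<longrightarrow> (\<forall>b\<in>B. c b = 0)) \<longleftrightarrow>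
      (\<forall>c. (\<forall>b\<in>B. c b \<in> h ` F) \<longrightarrow> (\<Sum>b\<in>B. c b * b) = 0 \<longrightarrow> (\<forall>b\<in>B. c b = 0))"
  proof (intro iffI allI impI ballI)
    fix c b assume A: "\<forall>c. (\<forall>b\<in>B. c b \<in> F) \<longrightarrow> (\<Sum>b\<in>B. h (c b) * b) = 0 \<longrightarrow> (\<forall>b\<in>B. c b = 0)"
      and c: "\<forall>b\<in>B. c b \<in> h ` F" and s: "(\<Sum>b\<in>B. c b * b) = 0" and b: "b \<in> B"
    have "(\<Sum>b\<in>B. h (h' (c b)) * b) = (\<Sum>b\<in>B. c b * b)"
      using c h'(2) by (intro sum.cong) auto
    moreover have "\<forall>b\<in>B. h' (c b) \<in> F" using c h'(1) by blast
    ultimately have "\<forall>b\<in>B. h' (c b) = 0" using spec[OF A, of "\<lambda>b. h' (c b)"] s by simp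
    then have "h (h' (c b)) = 0" using b zero(2) by simp
    then show "c b = 0" using h'(2)[OF bspec[OF c b]] by simp
  next
    fix c b assume A: "\<forall>c. (\<forall>b\<in>B. c b \<in> h ` F) \<longrightarrow> (\<Sum>b\<in>B. c b * b) = 0 \<longrightarrow> (\<forall>b\<in>B. c b = 0)"
      and c: "\<forall>b\<in>B. c b \<in> F" and s: "(\<Sum>b\<in>B. h (c b) * b) = 0" and b: "b \<in> B"
    have "\<forall>b\<in>B. h (c b) \<in> h ` F" using c by blast
    then have "\<forall>b\<in>B. h (c b) = 0" using spec[OF A, of "\<lambda>b. h (c b)"] s by blast
    then show "c b = 0" using h_eq_0 bspec[OF c b] b by blast
  qed
  have span: "(\<forall>v\<in>S. \<exists>c. (\<forall>b\<in>B. c b \<in> F) \<and> v = (\<Sum>b\<in>B. h (c b) * b)) \<longleftrightarrow>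
      (\<forall>v\<in>S. \<exists>c. (\<forall>b\<in>B. c b \<in> h ` F) \<and> v = (\<Sum>b\<in>B. c b * b))"
  proof (intro iffI ballI)
    fix v assume "\<forall>v\<in>S. \<exists>c. (\<forall>b\<in>B. c b \<in> F) \<and> v = (\<Sum>b\<in>B. h (c b) * b)" "v \<in> S"
    then obtain c where c: "\<forall>b\<in>B. c b \<in> F" "v = (\<Sum>b\<in>B. h (c b) * b)" by blast
    then show "\<exists>c. (\<forall>b\<in>B. c b \<in> h ` F) \<and> v = (\<Sum>b\<in>B. c b * b)"
      by (intro exI[of _ "\<lambda>b. h (c b)"]) blast
  next
    fix v assume "\<forall>v\<in>S. \<exists>c. (\<forall>b\<in>B. c b \<in> h ` F) \<and> v = (\<Sum>b\<in>B. c b * b)" "v \<in> S"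
    then obtain c where c: "\<forall>b\<in>B. c b \<in> h ` F" "v = (\<Sum>b\<in>B. c b * b)" by blast
    have "v = (\<Sum>b\<in>B. h (h' (c b)) * b)"
      unfolding c(2) using c(1) h'(2) by (intro sum.cong) auto
    moreover have "\<forall>b\<in>B. h' (c b) \<in> F" using c(1) h'(1) by blast
    ultimately show "\<exists>c. (\<forall>b\<in>B. c b \<in> F) \<and> v = (\<Sum>b\<in>B. h (c b) * b)"
      by (intro exI[of _ "\<lambda>b. h' (c b)"] conjI)
  qed
  show ?thesis unfolding is_basis_def using ind span by simp
qed

lemma bij_betw_images_of_eq_iff:
  assumes "\<And>a b. a \<in> A \<Longrightarrow> b \<in> A \<Longrightarrow> f a = f b \<longleftrightarrow> g a = g b"
  shows "bij_betw (\<lambda>y. g (inv_into A f y)) (f ` A) (g ` A)"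
proof -
  define h where "h y = g (inv_into A f y)" for y
  have hf: "h (f a) = g a" if a: "a \<in> A" for a
  proof -
    have "inv_into A f (f a) \<in> A" using a by (simp add: inv_into_into)
    moreover have "f (inv_into A f (f a)) = f a" using a by (simp add: f_inv_into_f)
    ultimately show ?thesis unfolding h_def using assms a by blast
  qed
  have "inj_on h (f ` A)"
  proof (rule inj_onI)
    fix x y assume "x \<in> f ` A" "y \<in> f ` A" "h x = h y"
    then obtain a b where ab: "a \<in> A" "b \<in> A" "x = f a" "y = f b" "h (f a) = h (f b)" by blast
    hence "g a = g b" using hf by simp
    thus "x = y" using assms ab by blast
  qed
  moreover have "h ` f ` A = g ` A"
  proof
    show "h ` f ` A \<subseteq> g ` A" using hf by auto
    show "g ` A \<subseteq> h ` f ` A"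
    proof
      fix z assume "z \<in> g ` A"
      then obtain a where "a \<in> A" "z = g a" by blast
      thus "z \<in> h ` f ` A" using hf by (metis imageI)
    qed
  qed
  ultimately show ?thesis unfolding bij_betw_def h_def by simp
qed

section \<open>The bimodule \<open>V(\<lambda>)\<close>\<close>

locale composite_emb =
  fixes K k :: "'a::field set" and lam :: "'a \<Rightarrow> 'a"
  assumes alg_closure: "is_alg_closure_of K"
    and perfect: "perfect_subfield K"
    and emb: "is_emb k K lam"
begin

abbreviation L :: "'a set" where "L \<equiv> composite K lam"

lemma subfield_K: "is_subfield K"
  using perfect unfolding perfect_subfield_def by blast

lemma subfield_L: "is_subfield L"
  unfolding composite_def by (rule subfield_Inter) blast

lemma K_subset_L: "K \<subseteq> L"
  unfolding composite_def by blast

lemma lam_in_L: "x \<in> K \<Longrightarrow> lam x \<in> L"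
  unfolding composite_def by blast

lemma L_minimal: "is_subfield F \<Longrightarrow> K \<subseteq> F \<Longrightarrow> lam ` K \<subseteq> F \<Longrightarrow> L \<subseteq> F"
  unfolding composite_def by blast

lemma hom_on_lam: "hom_on K lam"
proof -
  have add: "lam (x + y) = lam x + lam y" and mult: "lam (x * y) = lam x * lam y"
    if "x \<in> K" "y \<in> K" for x y
    using emb that unfolding is_emb_def by auto
  have "lam 0 + lam 0 = lam 0 + 0" using add[of 0 0] subfield_zero[OF subfield_K] by simp
  then have "lam 0 = 0" by (rule add_left_imp_eq)
  with emb add mult show ?thesis unfolding hom_on_def is_emb_def by blast
qed

lemma lam_fixes_k: "c \<in> k \<Longrightarrow> lam c = c"
  using emb subfield_one[OF subfield_K] hom_on_1[OF hom_on_lam]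
  unfolding is_emb_def by (metis mult.right_neutral)

lemma Gal_cl_eq_on_L:
  assumes s: "s \<in> Gal_cl K" and t: "t \<in> Gal_cl K"
    and eq: "\<And>x. x \<in> K \<Longrightarrow> s (lam x) = t (lam x)" and y: "y \<in> L"
  shows "s y = t y"
proof -
  define F where "F = {y. s y = t y}"
  have hs: "hom_on UNIV s" and ht: "hom_on UNIV t" using Gal_cl_hom_on s t by auto
  have "is_subfield F" unfolding is_subfield_def F_def
    using hom_on_0[OF hs] hom_on_0[OF ht] hom_on_1[OF hs] hom_on_1[OF ht]
      hom_on_add[OF hs] hom_on_add[OF ht] hom_on_mult[OF hs] hom_on_mult[OF ht]
      hom_on_uminus[OF subfield_UNIV hs] hom_on_uminus[OF subfield_UNIV ht]
      hom_on_inverse[OF subfield_UNIV hs] hom_on_inverse[OF subfield_UNIV ht]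
    by simp
  moreover have "K \<subseteq> F" unfolding F_def using Gal_clD(4)[OF s] Gal_clD(4)[OF t] by auto
  moreover have "lam ` K \<subseteq> F" unfolding F_def using eq by auto
  ultimately have "L \<subseteq> F" by (rule L_minimal)
  with y show ?thesis unfolding F_def by auto
qed

lemma is_tsvs_V_lam: "is_tsvs k K (V_lam K lam)"
proof -
  have lam_add: "lam (a + b) = lam a + lam b" and lam_mult: "lam (a * b) = lam a * lam b"
    if "a \<in> K" "b \<in> K" for a b
    using that hom_on_add[OF hom_on_lam] hom_on_mult[OF hom_on_lam] by auto
  have "\<forall>a\<in>K. \<forall>v\<in>L. a * v \<in> L \<and> v * lam a \<in> L"
    using subfield_mult[OF subfield_L] K_subset_L lam_in_L by blast
  with subfield_L show ?thesis
    unfolding is_tsvs_def V_lam_def Let_def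
    by (simp add: subfield_zero subfield_add subfield_uminus lam_add lam_mult lam_fixes_k
        hom_on_1[OF hom_on_lam] algebra_simps)
qed

text \<open>The multipliers of a sub-bimodule form a subring of \<open>L\<close> containing \<open>K\<close> and
  \<open>\<lambda>(K)\<close>; it is closed under inverses because every element is algebraic over \<open>K\<close>.\<close>

lemma sub_tsvs_V_lam_eq:
  assumes W: "is_sub_tsvs K (V_lam K lam) W" and ne: "W \<noteq> {0}"
  shows "W = L"
proof -
  have WL: "W \<subseteq> L" and W0: "0 \<in> W" and Wadd: "\<And>v w. v \<in> W \<Longrightarrow> w \<in> W \<Longrightarrow> v + w \<in> W"
    and Wl: "\<And>a v. a \<in> K \<Longrightarrow> v \<in> W \<Longrightarrow> a * v \<in> W"
    and Wr: "\<And>a v. a \<in> K \<Longrightarrow> v \<in> W \<Longrightarrow> v * lam a \<in> W"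
    using W unfolding is_sub_tsvs_def V_lam_def by auto
  obtain w where w: "w \<in> W" "w \<noteq> 0" using ne W0 by blast
  define S where "S = {x \<in> L. \<forall>v\<in>W. x * v \<in> W}"
  have S_add: "x + y \<in> S" if "x \<in> S" "y \<in> S" for x y
    using that subfield_add[OF subfield_L] Wadd unfolding S_def by (auto simp: distrib_right)
  have S_mult: "x * y \<in> S" if "x \<in> S" "y \<in> S" for x y
    using that subfield_mult[OF subfield_L] unfolding S_def by (auto simp: mult.assoc)
  have KS: "K \<subseteq> S" unfolding S_def using K_subset_L Wl by auto
  have lS: "lam ` K \<subseteq> S" unfolding S_def using lam_in_L Wr by (auto simp: mult.commute)
  have "is_subfield S"
  proof (rule algebraic_subring_is_subfield[OF subfield_K KS S_add S_mult])
    fix x show "\<exists>p. p \<noteq> 0 \<and> poly_over K p \<and> poly p x = 0"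
      using is_alg_closure_ofD(2)[OF alg_closure] by blast
  qed
  then have LS: "L \<subseteq> S" using KS lS by (intro L_minimal) auto
  have "y \<in> W" if y: "y \<in> L" for y
  proof -
    have "y * inverse w \<in> L"
      using y w WL subfield_mult[OF subfield_L] subfield_inverse[OF subfield_L] by blast
    then have "(y * inverse w) * w \<in> W" using LS w(1) unfolding S_def by blast
    moreover have "(y * inverse w) * w = y" using w(2) by (simp add: mult.assoc)
    ultimately show "y \<in> W" by simp
  qed
  with WL show ?thesis by blast
qed

lemma simple_tsvs_V_lam: "simple_tsvs k K (V_lam K lam)"
proof -
  have vc: "vcarrier (V_lam K lam) = L" unfolding V_lam_def by simp
  show ?thesis
    unfolding simple_tsvs_def
    using is_tsvs_V_lam sub_tsvs_V_lam_eq subfield_one[OF subfield_L] vc by auto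
qed

lemma left_dim_V_lam: "left_dim K (V_lam K lam) = field_degree L K"
  unfolding left_dim_def field_degree_def V_lam_def by simp

lemma right_dim_V_lam: "right_dim K (V_lam K lam) = field_degree L (lam ` K)"
proof -
  have comm: "(\<lambda>a v. v * lam a) = (\<lambda>a v. lam a * v)" by (simp add: fun_eq_iff mult.commute)
  have e: "is_basis K (\<lambda>a v. v * lam a) L = is_basis (lam ` K) (*) L"
    unfolding comm by (rule ext, rule is_basis_mult_image_iff[OF hom_on_inj_on[OF subfield_K hom_on_lam]
        subfield_zero[OF subfield_K] hom_on_0[OF hom_on_lam]])
  have "right_dim K (V_lam K lam) = vs_dim K (\<lambda>a v. v * lam a) L" unfolding right_dim_def V_lam_def by simp
  also have "\<dots> = vs_dim (lam ` K) (*) L" unfolding vs_dim_def e ..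
  also have "\<dots> = field_degree L (lam ` K)" unfolding field_degree_def ..
  finally show ?thesis .
qed

end

locale composite_basis = composite_emb +
  fixes m :: nat and alpha :: "nat \<Rightarrow> 'a"
  assumes inj_alpha: "inj_on alpha {..<m}"
    and basis: "is_basis K (*) (composite K lam) (alpha ` {..<m})"
begin

lemma alpha_in_L: "j < m \<Longrightarrow> alpha j \<in> L"
  using basis unfolding is_basis_def by auto

lemma mult_alpha_in_L: "u \<in> L \<Longrightarrow> j < m \<Longrightarrow> u * alpha j \<in> L"
  using subfield_mult[OF subfield_L] alpha_in_L by blast

lemma K_combination_in_L:
  "(\<And>j. j \<in> A \<Longrightarrow> a j \<in> K) \<Longrightarrow> (\<And>j. j \<in> A \<Longrightarrow> x j \<in> L) \<Longrightarrow> (\<Sum>j\<in>A. a j * x j) \<in> L"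
  using K_subset_L by (blast intro: subfield_sum[OF subfield_L] subfield_mult[OF subfield_L])

lemma basis_independent:
  assumes cK: "\<forall>j<m. c j \<in> K" and zero: "(\<Sum>j<m. c j * alpha j) = 0"
  shows "\<forall>j<m. c j = 0"
proof -
  define c' where "c' b = c (inv_into {..<m} alpha b)" for b
  have "\<forall>b\<in>alpha ` {..<m}. c' b \<in> K"
    using cK unfolding c'_def by (auto simp: inv_into_f_f[OF inj_alpha])
  moreover have "(\<Sum>b\<in>alpha ` {..<m}. c' b * b) = 0"
    using zero by (simp add: sum.reindex[OF inj_alpha] c'_def inv_into_f_f[OF inj_alpha])
  ultimately have "\<forall>b\<in>alpha ` {..<m}. c' b = 0" using basis unfolding is_basis_def by blast
  then show ?thesis unfolding c'_def by (auto simp: inv_into_f_f[OF inj_alpha])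
qed

lemma basis_spans: "u \<in> L \<Longrightarrow> \<exists>c. (\<forall>j<m. c j \<in> K) \<and> u = (\<Sum>j<m. c j * alpha j)"
proof -
  assume u: "u \<in> L"
  then obtain c where c: "\<forall>b\<in>alpha ` {..<m}. c b \<in> K" "u = (\<Sum>b\<in>alpha ` {..<m}. c b * b)"
    using basis unfolding is_basis_def by blast
  then have "u = (\<Sum>j<m. c (alpha j) * alpha j)" by (simp add: sum.reindex[OF inj_alpha])
  with c(1) show ?thesis by (intro exI[of _ "\<lambda>j. c (alpha j)"]) simp
qed

definition coord :: "'a \<Rightarrow> nat \<Rightarrow> 'a" where
  "coord u = (SOME c. (\<forall>j<m. c j \<in> K) \<and> u = (\<Sum>j<m. c j * alpha j))"

lemma coord: "u \<in> L \<Longrightarrow> (\<forall>j<m. coord u j \<in> K) \<and> u = (\<Sum>j<m. coord u j * alpha j)"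
  using someI_ex[OF basis_spans] unfolding coord_def .

lemma coord_in_K: "u \<in> L \<Longrightarrow> j < m \<Longrightarrow> coord u j \<in> K"
  using coord by blast

lemma coord_expansion: "u \<in> L \<Longrightarrow> u = (\<Sum>j<m. coord u j * alpha j)"
  using coord by blast

lemma coord_unique:
  assumes cK: "\<forall>j<m. c j \<in> K" and u: "u = (\<Sum>j<m. c j * alpha j)"
  shows "\<forall>j<m. coord u j = c j"
proof -
  have uL: "u \<in> L" unfolding u by (rule K_combination_in_L) (use cK alpha_in_L in auto)
  have "(\<Sum>j<m. (coord u j - c j) * alpha j) = (\<Sum>j<m. coord u j * alpha j) - (\<Sum>j<m. c j * alpha j)"
    by (simp add: algebra_simps sum_subtractf)
  also have "\<dots> = 0" using coord_expansion[OF uL] u by simp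
  finally have zero: "(\<Sum>j<m. (coord u j - c j) * alpha j) = 0" .
  have "\<forall>j<m. coord u j - c j \<in> K"
    using coord_in_K[OF uL] cK subfield_diff[OF subfield_K] by blast
  from basis_independent[OF this zero] show ?thesis by simp
qed

lemma coord_sum:
  assumes fin: "finite A" and a: "\<And>i. i \<in> A \<Longrightarrow> a i \<in> K" and x: "\<And>i. i \<in> A \<Longrightarrow> x i \<in> L"
    and j: "j < m"
  shows "coord (\<Sum>i\<in>A. a i * x i) j = (\<Sum>i\<in>A. a i * coord (x i) j)"
proof -
  define c where "c j = (\<Sum>i\<in>A. a i * coord (x i) j)" for j
  have cK: "\<forall>j<m. c j \<in> K"
  proof (intro allI impI)
    fix j assume j: "j < m"
    show "c j \<in> K" unfolding c_def
      by (rule subfield_sum[OF subfield_K], rule subfield_mult[OF subfield_K a coord_in_K[OF x j]])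
  qed
  have "(\<Sum>i\<in>A. a i * x i) = (\<Sum>i\<in>A. a i * (\<Sum>j<m. coord (x i) j * alpha j))"
    using coord_expansion[OF x] by (intro sum.cong) auto
  also have "\<dots> = (\<Sum>i\<in>A. \<Sum>j<m. a i * coord (x i) j * alpha j)"
    by (simp add: sum_distrib_left mult.assoc)
  also have "\<dots> = (\<Sum>j<m. \<Sum>i\<in>A. a i * coord (x i) j * alpha j)"
    by (rule sum.swap)
  also have "\<dots> = (\<Sum>j<m. c j * alpha j)"
    unfolding c_def by (simp add: sum_distrib_right)
  finally have "\<forall>j<m. coord (\<Sum>i\<in>A. a i * x i) j = c j" by (rule coord_unique[OF cK])
  with j show ?thesis unfolding c_def by blast
qed

lemma coord_add: "u \<in> L \<Longrightarrow> v \<in> L \<Longrightarrow> j < m \<Longrightarrow> coord (u + v) j = coord u j + coord v j"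
proof -
  assume u: "u \<in> L" and v: "v \<in> L" and j: "j < m"
  have "u + v = (\<Sum>j<m. (coord u j + coord v j) * alpha j)"
    by (subst coord_expansion[OF u], subst coord_expansion[OF v]) (simp add: sum.distrib distrib_right)
  then have "\<forall>j<m. coord (u + v) j = coord u j + coord v j"
    by (rule coord_unique[rotated]) (use coord_in_K[OF u] coord_in_K[OF v] subfield_add[OF subfield_K] in blast)
  with j show ?thesis by blast
qed

lemma coord_smult: "a \<in> K \<Longrightarrow> u \<in> L \<Longrightarrow> j < m \<Longrightarrow> coord (a * u) j = a * coord u j"
proof -
  assume a: "a \<in> K" and u: "u \<in> L" and j: "j < m"
  have "a * u = (\<Sum>j<m. (a * coord u j) * alpha j)"
    by (subst coord_expansion[OF u]) (simp add: sum_distrib_left mult.assoc)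
  then have "\<forall>j<m. coord (a * u) j = a * coord u j"
    by (rule coord_unique[rotated]) (use coord_in_K[OF u] subfield_mult[OF subfield_K a] in blast)
  with j show ?thesis by blast
qed

lemma coord_diff: "u \<in> L \<Longrightarrow> v \<in> L \<Longrightarrow> j < m \<Longrightarrow> coord (u - v) j = coord u j - coord v j"
proof -
  assume u: "u \<in> L" and v: "v \<in> L" and j: "j < m"
  have "coord ((u - v) + v) j = coord (u - v) j + coord v j"
    using coord_add[OF subfield_diff[OF subfield_L u v] v j] .
  then show ?thesis by simp
qed

lemma coord_alpha: "i < m \<Longrightarrow> j < m \<Longrightarrow> coord (alpha i) j = (if j = i then 1 else 0)"
proof -
  assume i: "i < m" and j: "j < m"
  have "(\<Sum>j<m. (if j = i then 1 else 0) * alpha j) = (\<Sum>j<m. if j = i then alpha j else 0)"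
    by (rule sum.cong) auto
  then have "alpha i = (\<Sum>j<m. (if j = i then 1 else 0) * alpha j)"
    using i by simp
  then have "\<forall>j<m. coord (alpha i) j = (if j = i then 1 else 0)"
    by (intro coord_unique) (simp add: subfield_zero[OF subfield_K] subfield_one[OF subfield_K])
  with j show ?thesis by blast
qed

lemma basis_nonempty: "m > 0"
  using coord_expansion[OF subfield_one[OF subfield_L]] by (cases m) auto

lemma Gal_cl_apply_L:
  assumes s: "s \<in> Gal_cl K" and y: "y \<in> L"
  shows "s y = (\<Sum>j<m. coord y j * s (alpha j))"
proof -
  have "s y = (\<Sum>j<m. s (coord y j) * s (alpha j))"
    by (subst coord_expansion[OF y]) (simp add: Gal_cl_sum[OF s] Gal_cl_mult[OF s])
  also have "\<dots> = (\<Sum>j<m. coord y j * s (alpha j))"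
    by (rule sum.cong) (auto simp: Gal_clD(4)[OF s] coord_in_K[OF y])
  finally show ?thesis .
qed

end

section \<open>The size of the orbit of \<open>\<lambda>\<close>\<close>

context composite_basis
begin

definition orbit_emb :: "('a \<Rightarrow> 'a) \<Rightarrow> 'a \<Rightarrow> 'a" where
  "orbit_emb s = (\<lambda>x. if x \<in> K then s (lam x) else undefined)"

definition conj_vec :: "('a \<Rightarrow> 'a) \<Rightarrow> nat \<Rightarrow> 'a" where
  "conj_vec s = (\<lambda>j. if j < m then s (alpha j) else 0)"

definition conj_vecs :: "(nat \<Rightarrow> 'a) set" where
  "conj_vecs = conj_vec ` Gal_cl K"

lemma emb_orbit_eq: "emb_orbit K lam = orbit_emb ` Gal_cl K"
  unfolding emb_orbit_def orbit_emb_def by auto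

lemma orbit_emb_eq_iff:
  assumes s: "s \<in> Gal_cl K" and t: "t \<in> Gal_cl K"
  shows "orbit_emb s = orbit_emb t \<longleftrightarrow> conj_vec s = conj_vec t"
proof
  assume "orbit_emb s = orbit_emb t"
  then have "s (lam x) = t (lam x)" if "x \<in> K" for x
    using that unfolding orbit_emb_def by (metis (mono_tags))
  then show "conj_vec s = conj_vec t"
    unfolding conj_vec_def using Gal_cl_eq_on_L[OF s t] alpha_in_L by auto
next
  assume "conj_vec s = conj_vec t"
  then have "s (alpha j) = t (alpha j)" if "j < m" for j
    using fun_cong[of _ _ j] that unfolding conj_vec_def by fastforce
  then have "s y = t y" if "y \<in> L" for y
    using Gal_cl_apply_L[OF s that] Gal_cl_apply_L[OF t that] by simp
  then show "orbit_emb s = orbit_emb t" unfolding orbit_emb_def using lam_in_L by auto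
qed

lemma conj_vec_comp: "s \<in> Gal_cl K \<Longrightarrow> (\<lambda>j. s (conj_vec t j)) = conj_vec (s \<circ> t)"
  using hom_on_0[OF Gal_cl_hom_on] unfolding conj_vec_def by (auto simp: fun_eq_iff)

lemma conj_vecs_support: "v \<in> conj_vecs \<Longrightarrow> i \<ge> m \<Longrightarrow> v i = 0"
  unfolding conj_vecs_def conj_vec_def by auto

lemma conj_vecs_independent: "fun_vs.independent conj_vecs"
proof (rule fun_vs_independentI)
  fix T c assume T: "finite T" "T \<subseteq> conj_vecs" "\<forall>i. (\<Sum>v\<in>T. c v * v i) = 0"
  define aut where "aut v = inv_into (Gal_cl K) conj_vec v" for v
  have aut: "aut v \<in> Gal_cl K" "conj_vec (aut v) = v" if "v \<in> T" for v
  proof -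
    have "v \<in> conj_vec ` Gal_cl K" using T(2) that unfolding conj_vecs_def by blast
    then show "aut v \<in> Gal_cl K" "conj_vec (aut v) = v"
      unfolding aut_def by (simp_all add: inv_into_into f_inv_into_f)
  qed
  have aut_alpha: "aut v (alpha j) = v j" if "v \<in> T" "j < m" for v j
    using fun_cong[OF aut(2)[OF that(1)], of j] that(2) unfolding conj_vec_def by simp
  show "\<forall>v\<in>T. c v = 0"
  proof (rule dedekind_independence[where I = T and tau = aut and L = L])
    fix v x y assume "v \<in> T" "x \<in> L" "y \<in> L"
    then show "aut v (x * y) = aut v x * aut v y" using Gal_cl_mult aut by blast
  next
    fix v assume "v \<in> T" then show "aut v 1 = 1" using hom_on_1[OF Gal_cl_hom_on[OF aut(1)]] by blast
  next
    fix v w assume vw: "v \<in> T" "w \<in> T" "v \<noteq> w"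
    then obtain j where "j < m" "v j \<noteq> w j"
      using conj_vecs_support T(2) by (metis linorder_not_le subsetD ext)
    then show "\<exists>x\<in>L. aut v x \<noteq> aut w x" using aut_alpha vw alpha_in_L by metis
  next
    show "\<forall>x\<in>L. (\<Sum>v\<in>T. c v * aut v x) = 0"
    proof
      fix x assume x: "x \<in> L"
      have "(\<Sum>v\<in>T. c v * aut v x) = (\<Sum>v\<in>T. c v * (\<Sum>j<m. coord x j * v j))"
        using Gal_cl_apply_L[OF aut(1) x] aut_alpha by (intro sum.cong) auto
      also have "\<dots> = (\<Sum>j<m. coord x j * (\<Sum>v\<in>T. c v * v j))"
        by (simp add: sum_distrib_left sum_distrib_right sum.swap[of _ T] mult_ac)
      also have "\<dots> = 0" using T(3) by simp
      finally show "(\<Sum>v\<in>T. c v * aut v x) = 0" .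
    qed
  qed (use T(1) subfield_one[OF subfield_L] subfield_mult[OF subfield_L] in auto)
qed

lemma conj_vecs_no_relation:
  assumes sol: "\<forall>r\<in>conj_vecs. (\<Sum>j<m. c j * r j) = 0"
  shows "\<forall>j<m. c j = 0"
proof (rule Gal_cl_descent[of K conj_vecs m, OF _ _ _ sol])
  fix x assume "\<forall>s\<in>Gal_cl K. s x = x"
  then show "x \<in> K" by (rule Gal_cl_fixed_imp_mem[OF alg_closure perfect])
next
  fix r s assume r: "r \<in> conj_vecs" and s: "s \<in> Gal_cl K"
  then obtain t where t: "t \<in> Gal_cl K" "r = conj_vec t" unfolding conj_vecs_def by blast
  then show "(\<lambda>j. s (r j)) \<in> conj_vecs"
    unfolding conj_vecs_def using conj_vec_comp[OF s] Gal_cl_comp[OF s t(1)] by auto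
next
  fix c assume cK: "\<forall>j<m. c j \<in> K" and sol': "\<forall>r\<in>conj_vecs. (\<Sum>j<m. c j * r j) = 0"
  have "conj_vec id \<in> conj_vecs" unfolding conj_vecs_def using Gal_cl_id by blast
  then have "(\<Sum>j<m. c j * conj_vec id j) = 0" using sol' by blast
  then have "(\<Sum>j<m. c j * alpha j) = 0" by (simp add: conj_vec_def)
  then show "\<forall>j<m. c j = 0" by (rule basis_independent[OF cK])
qed

lemma card_conj_vecs: "finite conj_vecs \<and> card conj_vecs = m"
proof -
  have le: "finite conj_vecs \<and> card conj_vecs \<le> m"
    by (rule fun_vs_card_independent_le) (use conj_vecs_support conj_vecs_independent in auto)
  moreover have "m \<le> card conj_vecs"
    by (rule card_ge_if_columns_independent[where w = "\<lambda>j v. v j"])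
      (use le conj_vecs_no_relation in auto)
  ultimately show ?thesis by simp
qed

lemma card_emb_orbit: "finite (emb_orbit K lam) \<and> card (emb_orbit K lam) = m"
proof -
  have "bij_betw (\<lambda>y. conj_vec (inv_into (Gal_cl K) orbit_emb y)) (orbit_emb ` Gal_cl K) conj_vecs"
    unfolding conj_vecs_def by (rule bij_betw_images_of_eq_iff) (rule orbit_emb_eq_iff)
  then show ?thesis
    using card_conj_vecs bij_betw_finite bij_betw_same_card emb_orbit_eq by metis
qed

end

section \<open>The isomorphism with \<open>K\<^sup>m\<^sub>\<phi>\<close>\<close>

context composite_basis
begin

definition dual_coords :: "'a \<Rightarrow> nat \<Rightarrow> 'a" where
  "dual_coords u = (\<lambda>j. if j < m then coord (u * alpha j) 0 else 0)"

definition pairing_matrix :: "nat \<Rightarrow> nat \<Rightarrow> 'a" where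
  "pairing_matrix i j = (if i < m \<and> j < m then coord (alpha i * alpha j) 0 else 0)"

lemma dual_coords_in_K:
  assumes u: "u \<in> L"
  shows "dual_coords u i \<in> K"
proof (cases "i < m")
  case True
  then show ?thesis
    using coord_in_K[OF mult_alpha_in_L[OF u True] basis_nonempty] by (simp add: dual_coords_def)
qed (simp add: dual_coords_def subfield_zero[OF subfield_K])

lemma dual_coords_add: "u \<in> L \<Longrightarrow> v \<in> L \<Longrightarrow> dual_coords (u + v) = dual_coords u + dual_coords v"
  unfolding dual_coords_def
  using coord_add[OF mult_alpha_in_L mult_alpha_in_L basis_nonempty]
  by (auto simp: fun_eq_iff distrib_right)

lemma dual_coords_smult: "a \<in> K \<Longrightarrow> u \<in> L \<Longrightarrow> dual_coords (a * u) = (\<lambda>i. a * dual_coords u i)"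
  unfolding dual_coords_def
  using coord_smult[OF _ mult_alpha_in_L basis_nonempty] by (auto simp: fun_eq_iff mult.assoc)

text \<open>Nondegeneracy of the pairing \<open>(u, v) \<mapsto> coord (u v) 0\<close>: for \<open>w \<noteq> 0\<close> the element
  \<open>w\<^sup>-\<^sup>1 \<alpha>\<^sub>0\<close> pairs with \<open>w\<close> to \<open>1\<close>.\<close>

lemma dual_coords_eq_0_imp:
  assumes w: "w \<in> L" and z: "\<forall>j<m. coord (w * alpha j) 0 = 0"
  shows "w = 0"
proof (rule ccontr)
  assume w0: "w \<noteq> 0"
  note m0 = basis_nonempty
  define y where "y = inverse w * alpha 0"
  have yL: "y \<in> L"
    unfolding y_def using subfield_mult[OF subfield_L subfield_inverse[OF subfield_L w] alpha_in_L[OF m0]] .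
  have "w * y = alpha 0" unfolding y_def using w0 by (simp add: mult.assoc[symmetric])
  then have "coord (w * y) 0 = 1" using coord_alpha[OF m0 m0] by simp
  moreover have "w * y = (\<Sum>j<m. coord y j * (w * alpha j))"
    by (subst coord_expansion[OF yL]) (simp add: sum_distrib_left mult_ac)
  then have "coord (w * y) 0 = (\<Sum>j<m. coord y j * coord (w * alpha j) 0)"
    using coord_sum[of "{..<m}" "coord y" "\<lambda>j. w * alpha j" 0] coord_in_K[OF yL] mult_alpha_in_L[OF w] m0
    by simp
  ultimately show False using z by simp
qed

lemma inj_on_dual_coords: "inj_on dual_coords L"
proof (rule inj_onI)
  fix u v assume u: "u \<in> L" and v: "v \<in> L" and eq: "dual_coords u = dual_coords v"
  have "coord ((u - v) * alpha j) 0 = 0" if j: "j < m" for j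
  proof -
    have "coord (u * alpha j) 0 = coord (v * alpha j) 0"
      using fun_cong[OF eq, of j] j unfolding dual_coords_def by simp
    moreover have "(u - v) * alpha j = u * alpha j - v * alpha j" by (simp add: algebra_simps)
    ultimately show ?thesis
      using coord_diff[OF mult_alpha_in_L[OF u j] mult_alpha_in_L[OF v j] basis_nonempty] by simp
  qed
  then have "u - v = 0" using dual_coords_eq_0_imp[OF subfield_diff[OF subfield_L u v]] by blast
  then show "u = v" by simp
qed

lemma pairing_matrix_in_K: "pairing_matrix i j \<in> K"
proof (cases "i < m \<and> j < m")
  case True
  then show ?thesis
    using coord_in_K[OF mult_alpha_in_L[OF alpha_in_L] basis_nonempty] by (simp add: pairing_matrix_def)
qed (auto simp: pairing_matrix_def subfield_zero[OF subfield_K])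

lemma coord_pairing_combination:
  assumes cK: "\<forall>i<m. c i \<in> K" and j: "j < m"
  shows "coord ((\<Sum>i<m. c i * alpha i) * alpha j) 0 = (\<Sum>i<m. c i * pairing_matrix i j)"
proof -
  have "(\<Sum>i<m. c i * alpha i) * alpha j = (\<Sum>i<m. c i * (alpha i * alpha j))"
    by (simp add: sum_distrib_right mult.assoc)
  then have "coord ((\<Sum>i<m. c i * alpha i) * alpha j) 0 = (\<Sum>i<m. c i * coord (alpha i * alpha j) 0)"
    using coord_sum[of "{..<m}" c "\<lambda>i. alpha i * alpha j" 0] cK mult_alpha_in_L[OF alpha_in_L] j
      basis_nonempty
    by simp
  also have "\<dots> = (\<Sum>i<m. c i * pairing_matrix i j)" using j by (simp add: pairing_matrix_def)
  finally show ?thesis .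
qed

lemma pairing_matrix_injective_K:
  assumes cK: "\<forall>i<m. c i \<in> K" and z: "\<forall>j<m. (\<Sum>i<m. c i * pairing_matrix i j) = 0"
  shows "\<forall>i<m. c i = 0"
proof -
  have "(\<Sum>i<m. c i * alpha i) \<in> L"
    by (rule K_combination_in_L) (use cK alpha_in_L in auto)
  moreover have "\<forall>j<m. coord ((\<Sum>i<m. c i * alpha i) * alpha j) 0 = 0"
    using coord_pairing_combination[OF cK] z by simp
  ultimately have "(\<Sum>i<m. c i * alpha i) = 0" by (rule dual_coords_eq_0_imp)
  then show ?thesis by (rule basis_independent[OF cK])
qed

text \<open>Since the matrix has entries in the fixed field \<open>K\<close>, descent upgrades its injectivity on
  \<open>K\<^sup>m\<close> to injectivity on all of \<open>'a\<^sup>m\<close>, where dimension counting applies.\<close>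

lemma pairing_matrix_injective:
  assumes z: "\<forall>j<m. (\<Sum>i<m. c i * pairing_matrix i j) = 0"
  shows "\<forall>i<m. c i = 0"
proof -
  define S where "S = {(\<lambda>i. pairing_matrix i j) | j. j < m}"
  have sol: "\<forall>r\<in>S. (\<Sum>i<m. c i * r i) = 0" using z unfolding S_def by auto
  show ?thesis
  proof (rule Gal_cl_descent[of K S m, OF _ _ _ sol])
    fix x assume "\<forall>s\<in>Gal_cl K. s x = x"
    then show "x \<in> K" by (rule Gal_cl_fixed_imp_mem[OF alg_closure perfect])
  next
    fix r s assume r: "r \<in> S" and s: "s \<in> Gal_cl K"
    have "(\<lambda>i. s (r i)) = r" using r Gal_clD(4)[OF s pairing_matrix_in_K] unfolding S_def by auto
    with r show "(\<lambda>i. s (r i)) \<in> S" by simp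
  next
    fix c assume cK: "\<forall>j<m. c j \<in> K" and sol': "\<forall>r\<in>S. (\<Sum>j<m. c j * r j) = 0"
    have "\<forall>j<m. (\<Sum>i<m. c i * pairing_matrix i j) = 0" using sol' unfolding S_def by auto
    then show "\<forall>j<m. c j = 0" by (rule pairing_matrix_injective_K[OF cK])
  qed
qed

lemma pairing_matrix_solvable:
  assumes tK: "\<forall>j<m. t j \<in> K"
  shows "\<exists>c. (\<forall>i<m. c i \<in> K) \<and> (\<forall>j<m. (\<Sum>i<m. c i * pairing_matrix i j) = t j)"
proof -
  obtain c where c: "\<forall>j<m. (\<Sum>i<m. c i * pairing_matrix i j) = t j"
    using square_system_solvable[of m pairing_matrix t] pairing_matrix_injective by blast
  have "c i \<in> K" if i: "i < m" for i
  proof (rule Gal_cl_fixed_imp_mem[OF alg_closure perfect], rule ballI)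
    fix s assume s: "s \<in> Gal_cl K"
    have "\<forall>j<m. (\<Sum>i<m. (s (c i) - c i) * pairing_matrix i j) = 0"
    proof (intro allI impI)
      fix j assume j: "j < m"
      have "(\<Sum>i<m. s (c i) * pairing_matrix i j) = s (\<Sum>i<m. c i * pairing_matrix i j)"
        by (simp add: Gal_cl_sum[OF s] Gal_cl_mult[OF s] Gal_clD(4)[OF s pairing_matrix_in_K])
      also have "\<dots> = t j" using c j Gal_clD(4)[OF s] tK by simp
      finally show "(\<Sum>i<m. (s (c i) - c i) * pairing_matrix i j) = 0"
        using c j by (simp add: algebra_simps sum_subtractf)
    qed
    then show "s (c i) = c i" using pairing_matrix_injective i by fastforce
  qed
  with c show ?thesis by blast
qed

lemma bij_betw_dual_coords:
  "bij_betw dual_coords L {v. (\<forall>i. v i \<in> K) \<and> (\<forall>i\<ge>m. v i = 0)}"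
proof -
  have "dual_coords u \<in> {v. (\<forall>i. v i \<in> K) \<and> (\<forall>i\<ge>m. v i = 0)}" if "u \<in> L" for u
    using dual_coords_in_K[OF that] by (simp add: dual_coords_def)
  then have "dual_coords ` L \<subseteq> {v. (\<forall>i. v i \<in> K) \<and> (\<forall>i\<ge>m. v i = 0)}" by blast
  moreover have "t \<in> dual_coords ` L" if "t \<in> {v. (\<forall>i. v i \<in> K) \<and> (\<forall>i\<ge>m. v i = 0)}" for t
  proof -
    from that have tK: "\<forall>j<m. t j \<in> K" and t0: "\<forall>i\<ge>m. t i = 0" by auto
    obtain c where c: "\<forall>i<m. c i \<in> K" "\<forall>j<m. (\<Sum>i<m. c i * pairing_matrix i j) = t j"
      using pairing_matrix_solvable[OF tK] by blast
    define u where "u = (\<Sum>i<m. c i * alpha i)"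
    have "dual_coords u = t"
    proof
      fix j
      show "dual_coords u j = t j"
      proof (cases "j < m")
        case True
        then show ?thesis
          unfolding dual_coords_def u_def using coord_pairing_combination[OF c(1) True] c(2) by simp
      next
        case False
        then show ?thesis using t0 by (simp add: dual_coords_def)
      qed
    qed
    moreover have "u \<in> L"
      unfolding u_def by (rule K_combination_in_L) (use c(1) alpha_in_L in auto)
    ultimately show ?thesis by blast
  qed
  ultimately show ?thesis
    unfolding bij_betw_def using inj_on_dual_coords by blast
qed

lemma dual_coords_right_action:
  assumes lc: "\<forall>x\<in>K. (\<forall>i<m. lc i x \<in> K) \<and> lam x = (\<Sum>i<m. lc i x * alpha i)"
    and beta: "\<forall>i<m. \<forall>j<m. (\<forall>l<m. beta i j l \<in> K) \<and> alpha i * alpha j = (\<Sum>l<m. beta i j l * alpha l)"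
    and v: "v \<in> L" and a: "a \<in> K" and j: "j < m"
  shows "dual_coords (v * lam a) j = (\<Sum>i<m. dual_coords v i * phi_of m beta lc i j a)"
proof -
  have coeff_K: "(\<Sum>k<m. beta j k i * lc k a) \<in> K" if i: "i < m" for i
  proof (rule subfield_sum[OF subfield_K])
    fix k assume "k \<in> {..<m}"
    then have "beta j k i \<in> K" "lc k a \<in> K" using beta lc a j i by auto
    then show "beta j k i * lc k a \<in> K" by (rule subfield_mult[OF subfield_K])
  qed
  have "lam a = (\<Sum>k<m. lc k a * alpha k)" using lc a by blast
  then have "v * lam a * alpha j = (\<Sum>k<m. lc k a * (v * (alpha j * alpha k)))"
    by (simp add: sum_distrib_left sum_distrib_right mult_ac)
  also have "\<dots> = (\<Sum>k<m. lc k a * (v * (\<Sum>i<m. beta j k i * alpha i)))"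
    by (rule sum.cong[OF refl]) (use beta j in auto)
  also have "\<dots> = (\<Sum>k<m. \<Sum>i<m. (beta j k i * lc k a) * (v * alpha i))"
    by (simp add: sum_distrib_left mult_ac)
  also have "\<dots> = (\<Sum>i<m. \<Sum>k<m. (beta j k i * lc k a) * (v * alpha i))"
    by (rule sum.swap)
  also have "\<dots> = (\<Sum>i<m. (\<Sum>k<m. beta j k i * lc k a) * (v * alpha i))"
    by (simp add: sum_distrib_right)
  finally have "coord (v * lam a * alpha j) 0 = (\<Sum>i<m. (\<Sum>k<m. beta j k i * lc k a) * coord (v * alpha i) 0)"
    by (simp only:) (rule coord_sum, use coeff_K mult_alpha_in_L[OF v] basis_nonempty in auto)
  with j show ?thesis
    by (simp add: dual_coords_def phi_of_def mult.commute)
qed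

lemma iso_tsvs_V_lam_Kn_phi:
  assumes lc: "\<forall>x\<in>K. (\<forall>i<m. lc i x \<in> K) \<and> lam x = (\<Sum>i<m. lc i x * alpha i)"
    and beta: "\<forall>i<m. \<forall>j<m. (\<forall>l<m. beta i j l \<in> K) \<and> alpha i * alpha j = (\<Sum>l<m. beta i j l * alpha l)"
  shows "iso_tsvs K (V_lam K lam) (Kn_phi K m (phi_of m beta lc))"
  unfolding iso_tsvs_def
proof (intro exI conjI ballI)
  show "bij_betw dual_coords (vcarrier (V_lam K lam)) (vcarrier (Kn_phi K m (phi_of m beta lc)))"
    using bij_betw_dual_coords by (simp add: V_lam_def Kn_phi_def)
next
  fix v w assume "v \<in> vcarrier (V_lam K lam)" "w \<in> vcarrier (V_lam K lam)"
  then show "dual_coords (v + w) = dual_coords v + dual_coords w"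
    using dual_coords_add by (simp add: V_lam_def)
next
  fix a v assume a: "a \<in> K" and "v \<in> vcarrier (V_lam K lam)"
  then have v: "v \<in> L" by (simp add: V_lam_def)
  show "dual_coords (lsmul (V_lam K lam) a v) = lsmul (Kn_phi K m (phi_of m beta lc)) a (dual_coords v)"
    using dual_coords_smult[OF a v] by (simp add: V_lam_def Kn_phi_def)
  show "dual_coords (rsmul (V_lam K lam) v a) = rsmul (Kn_phi K m (phi_of m beta lc)) (dual_coords v) a"
  proof
    fix j
    show "dual_coords (rsmul (V_lam K lam) v a) j = rsmul (Kn_phi K m (phi_of m beta lc)) (dual_coords v) a j"
    proof (cases "j < m")
      case True
      then show ?thesis using dual_coords_right_action[OF lc beta v a True] by (simp add: V_lam_def Kn_phi_def)
    qed (simp add: V_lam_def Kn_phi_def dual_coords_def)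
  qed
qed

end

theorem proposition2p3:
  fixes K k :: "'a::field set" and lam :: "'a \<Rightarrow> 'a" and n m :: nat
    and alpha :: "nat \<Rightarrow> 'a" and lc :: "nat \<Rightarrow> 'a \<Rightarrow> 'a" and beta :: "nat \<Rightarrow> nat \<Rightarrow> nat \<Rightarrow> 'a"
  assumes "is_alg_closure_of K"
    and "perfect_subfield K"
    and "is_subfield k" and "k \<subseteq> K"
    and "is_emb k K lam"
    and "finite (emb_orbit K lam)" and "card (emb_orbit K lam) = n"
    and "inj_on alpha {..<m}" and "is_basis K (*) (composite K lam) (alpha ` {..<m})"
    and "\<forall>x\<in>K. (\<forall>i<m. lc i x \<in> K) \<and> lam x = (\<Sum>i<m. lc i x * alpha i)"
    and "\<forall>i<m. \<forall>j<m. (\<forall>l<m. beta i j l \<in> K) \<and> alpha i * alpha j = (\<Sum>l<m. beta i j l * alpha l)"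
  shows "m = n \<and> simple_tsvs k K (V_lam K lam)
    \<and> iso_tsvs K (V_lam K lam) (Kn_phi K m (phi_of m beta lc))
    \<and> left_dim K (V_lam K lam) = field_degree (composite K lam) K
    \<and> right_dim K (V_lam K lam) = field_degree (composite K lam) (lam ` K)"
proof -
  interpret composite_basis K k lam m alpha
    using assms(1,2,5,8,9) by unfold_locales
  have "m = n"
    using card_emb_orbit assms(7) by simp
  then show ?thesis
    using simple_tsvs_V_lam iso_tsvs_V_lam_Kn_phi[OF assms(10,11)] left_dim_V_lam right_dim_V_lam
    by blast
qed

end
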